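(* Let $\mathbf{H}\in\mathbb{H}^4$. Then: (1) $\mathbf{Cov}_1(\mathbf{H})=\{0\}$ iff $\mathbf{Cov}_2(\mathbf{H})$ is at least orthotropic; (2) $\dim\mathbf{Cov}_1(\mathbf{H})=1$ iff $\mathbf{Cov}_2(\mathbf{H})$ is monoclinic; (3) $\dim\mathbf{Cov}_1(\mathbf{H})=3$ iff $\mathbf{Cov}_2(\mathbf{H})$ is triclinic.
   Context: $\mathbb{H}^4$ is the space of totally symmetric traceless fourth-order tensors on $\mathbb{R}^3$ with $SO(3)$-action $(g\star\mathbf{H})(x_1,\dots,x_4)=\mathbf{H}(g^{-1}x_1,\dots,g^{-1}x_4)$. $\mathbf{Cov}_1(\mathbf{H})\subset\mathbb{R}^3$ (resp. $\mathbf{Cov}_2(\mathbf{H})\subset\mathrm{Sym}^2(\mathbb{R}^3)$) is the set of values at $\mathbf{H}$ of all $SO(3)$-equivariant polynomial maps $\mathbb{H}^4\to\mathbb{R}^3$ (resp. $\to\mathrm{Sym}^2(\mathbb{R}^3)$). Symmetry group of a subspace: elements of $SO(3)$ fixing each member; symmetry class: its conjugacy class. Orthotropic $=[\mathbb{D}_2]$ (identity and rotations by $\pi$ about the coordinate axes), monoclinic $=[\mathbb{Z}_2]$ (group of order two generated by a rotation by $\pi$), triclinic = trivial group. "At least orthotropic" means the symmetry group contains a conjugate of $\mathbb{D}_2$. *)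

theory Defs
  imports "HOL-Analysis.Analysis"
begin

type_synonym tensor4 = "3 \<Rightarrow> 3 \<Rightarrow> 3 \<Rightarrow> 3 \<Rightarrow> real"

text \<open>Total symmetry is expressed by invariance under the adjacent transpositions,
  which generate the symmetric group on the four slots.\<close>
definition H4 :: "tensor4 set" where
  "H4 = {H. (\<forall>i j k l. H i j k l = H j i k l \<and> H i j k l = H i k j l \<and> H i j k l = H i j l k)
            \<and> (\<forall>k l. (\<Sum>i\<in>UNIV. H i i k l) = 0)}"

definition SO3 :: "(real^3^3) set" where
  "SO3 = {g. orthogonal_matrix g \<and> det g = 1}"

text \<open>(g * H)(x1,..,x4) = H(g^-1 x1, .., g^-1 x4), in components.\<close>
definition act4 :: "real^3^3 \<Rightarrow> tensor4 \<Rightarrow> tensor4" where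
  "act4 g H = (\<lambda>i j k l. \<Sum>a\<in>UNIV. \<Sum>b\<in>UNIV. \<Sum>c\<in>UNIV. \<Sum>d\<in>UNIV.
                 g$i$a * g$j$b * g$k$c * g$l$d * H a b c d)"

inductive tpoly :: "(tensor4 \<Rightarrow> real) \<Rightarrow> bool" where
  tpoly_const: "tpoly (\<lambda>X. c)"
| tpoly_coord: "tpoly (\<lambda>X. X i j k l)"
| tpoly_add: "tpoly p \<Longrightarrow> tpoly q \<Longrightarrow> tpoly (\<lambda>X. p X + q X)"
| tpoly_mult: "tpoly p \<Longrightarrow> tpoly q \<Longrightarrow> tpoly (\<lambda>X. p X * q X)"

definition Cov1 :: "tensor4 \<Rightarrow> (real^3) set" where
  "Cov1 H = {f H | f. (\<forall>i. tpoly (\<lambda>X. f X $ i))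
                 \<and> (\<forall>g\<in>SO3. \<forall>X\<in>H4. f (act4 g X) = g *v f X)}"

definition Cov2 :: "tensor4 \<Rightarrow> (real^3^3) set" where
  "Cov2 H = {f H | f. (\<forall>i j. tpoly (\<lambda>X. f X $ i $ j))
                 \<and> (\<forall>X\<in>H4. transpose (f X) = f X)
                 \<and> (\<forall>g\<in>SO3. \<forall>X\<in>H4. f (act4 g X) = g ** f X ** transpose g)}"

definition symgroup :: "(real^3^3) set \<Rightarrow> (real^3^3) set" where
  "symgroup S = {g\<in>SO3. \<forall>A\<in>S. g ** A ** transpose g = A}"

definition conjg :: "real^3^3 \<Rightarrow> (real^3^3) set \<Rightarrow> (real^3^3) set" where
  "conjg g G = (\<lambda>h. g ** h ** transpose g) ` G"

definition diag3 :: "real \<Rightarrow> real \<Rightarrow> real \<Rightarrow> real^3^3" where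
  "diag3 a b c = (\<chi> i j. if i = j then (vector [a, b, c] :: real^3) $ i else 0)"

definition D2 :: "(real^3^3) set" where
  "D2 = {mat 1, diag3 1 (-1) (-1), diag3 (-1) 1 (-1), diag3 (-1) (-1) 1}"

definition Z2 :: "(real^3^3) set" where
  "Z2 = {mat 1, diag3 (-1) (-1) 1}"

end

(*
  Values of covariants are equivariant: rotating H rotates Cov1 H and conjugates Cov2 H.
  Cov1 H is a subspace closed under the cross product, so it is {0}, a line or all of R^3.

  The axial vector of the commutator of two members of Cov2 H lies in Cov1 H, so Cov1 H = {0}
  makes Cov2 H commutative, i.e. simultaneously diagonalisable, i.e. fixed by a conjugate of D2.
  Conversely, if Cov1 H contains a unit vector n although Cov2 H is commutative, rotate n to the
  third axis, choosing the first axis stationary for x |-> H(x,x,x,x) + H(x,x,x,n) on the circle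
  orthogonal to n.  Commutation of the covariants n n^T, H(.,.,n,n), the commutator of the
  cross-product matrix of n with H(.,.,n,n), and the triple contraction H : H then kills every
  component of H with an odd number of indices 2, so the half turn about the second axis fixes H
  and hence n, which it reverses.

  If Cov1 H is a line, every member of Cov2 H has it as an eigenvector, and a rotation commuting
  with two non-commuting such matrices is a half turn about the line or the identity.  If
  Cov1 H = R^3, Cov2 H contains every v v^T, and only the identity commutes with all of them.
*)

theory Submission
  imports Defs
begin

section \<open>Index calculus for the action on fourth-order tensors\<close>

lemma sum_move_inside2:
  "(\<Sum>a\<in>A. \<Sum>b\<in>B. \<Sum>c\<in>C. f a b c) = (\<Sum>b\<in>B. \<Sum>c\<in>C. \<Sum>a\<in>A. f a b c)"
  by (rule trans[OF sum.swap], rule sum.cong[OF refl], rule sum.swap)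

lemma sum_move_inside3:
  "(\<Sum>a\<in>A. \<Sum>b\<in>B. \<Sum>c\<in>C. \<Sum>d\<in>D. f a b c d) = (\<Sum>b\<in>B. \<Sum>c\<in>C. \<Sum>d\<in>D. \<Sum>a\<in>A. f a b c d)"
  by (rule trans[OF sum.swap], rule sum.cong[OF refl], rule sum_move_inside2)

lemma sum_move_inside4:
  "(\<Sum>a\<in>A. \<Sum>b\<in>B. \<Sum>c\<in>C. \<Sum>d\<in>D. \<Sum>e\<in>E. f a b c d e)
     = (\<Sum>b\<in>B. \<Sum>c\<in>C. \<Sum>d\<in>D. \<Sum>e\<in>E. \<Sum>a\<in>A. f a b c d e)"
  by (rule trans[OF sum.swap], rule sum.cong[OF refl], rule sum_move_inside3)

lemma orthogonal_matrix_col_sum: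
  fixes g :: "real^'n^'n"
  assumes "orthogonal_matrix g"
  shows "(\<Sum>k\<in>UNIV. g$k$a * g$k$b) = of_bool (a = b)"
proof -
  have "(transpose g ** g)$a$b = mat 1 $ a $ b"
    using assms by (simp add: orthogonal_matrix_def)
  thus ?thesis by (simp add: matrix_matrix_mult_def transpose_def mat_def of_bool_def)
qed

lemma orthogonal_matrix_col_sum_mult:
  fixes g :: "real^'n^'n"
  assumes "orthogonal_matrix g"
  shows "(\<Sum>k\<in>UNIV. (\<Sum>b\<in>UNIV. g$k$b * F b) * (\<Sum>b\<in>UNIV. g$k$b * G b)) = (\<Sum>b\<in>UNIV. F b * G b)"
proof -
  have "(\<Sum>k\<in>UNIV. (\<Sum>b\<in>UNIV. g$k$b * F b) * (\<Sum>b\<in>UNIV. g$k$b * G b))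
     = (\<Sum>k\<in>UNIV. \<Sum>b\<in>UNIV. \<Sum>b'\<in>UNIV. (F b * G b') * (g$k$b * g$k$b'))"
    by (simp add: sum_product mult_ac)
  also have "\<dots> = (\<Sum>b\<in>UNIV. \<Sum>b'\<in>UNIV. (F b * G b') * (\<Sum>k\<in>UNIV. g$k$b * g$k$b'))"
    by (rule trans[OF sum.swap], rule sum.cong[OF refl], rule trans[OF sum.swap])
      (simp add: sum_distrib_left)
  also have "\<dots> = (\<Sum>b\<in>UNIV. F b * G b)"
    by (simp add: orthogonal_matrix_col_sum[OF assms])
  finally show ?thesis .
qed

lemma orthogonal_matrix_col_sum_vec:
  fixes g :: "real^'n^'n"
  assumes "orthogonal_matrix g"
  shows "(\<Sum>k\<in>UNIV. g$k$c * (g *v w)$k) = w$c"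
proof -
  have "(transpose g *v (g *v w))$c = w$c"
    using assms by (simp add: matrix_vector_mul_assoc orthogonal_matrix_def)
  thus ?thesis by (simp add: matrix_vector_mult_def transpose_def)
qed

lemma sum_factor2:
  "(\<Sum>k\<in>K. \<Sum>l\<in>L. c * (A k * B l)) = (c::real) * ((\<Sum>k\<in>K. A k) * (\<Sum>l\<in>L. B l))"
  unfolding sum_product by (simp only: sum_distrib_left)

lemma sum_factor4:
  "(\<Sum>i\<in>I. \<Sum>j\<in>J. \<Sum>k\<in>K. \<Sum>l\<in>L. c * (A i * B j * C k * D l))
     = (c::real) * ((\<Sum>i\<in>I. A i) * (\<Sum>j\<in>J. B j) * (\<Sum>k\<in>K. C k) * (\<Sum>l\<in>L. D l))"
  by (simp only: mult.assoc[symmetric] sum_distrib_left[symmetric] sum_distrib_right[symmetric])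

lemma H4_symmetric:
  assumes "X \<in> H4"
  shows "X i j k l = X j i k l" "X i j k l = X i k j l" "X i j k l = X i j l k"
  using assms unfolding H4_def by auto

lemma H4_traceless: "X \<in> H4 \<Longrightarrow> (\<Sum>i\<in>UNIV. X i i k l) = 0"
  unfolding H4_def by auto

lemma act4_swap12: "X \<in> H4 \<Longrightarrow> act4 g X j i k l = act4 g X i j k l"
  unfolding act4_def
  by (subst sum.swap) (intro sum.cong refl, simp add: H4_symmetric(1) mult_ac)

lemma act4_swap23: "X \<in> H4 \<Longrightarrow> act4 g X i k j l = act4 g X i j k l"
  unfolding act4_def
  by (rule sum.cong[OF refl], subst sum.swap) (intro sum.cong refl, simp add: H4_symmetric(2) mult_ac)

lemma act4_swap34: "X \<in> H4 \<Longrightarrow> act4 g X i j l k = act4 g X i j k l"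
  unfolding act4_def
  by (rule sum.cong[OF refl], rule sum.cong[OF refl], subst sum.swap)
    (intro sum.cong refl, simp add: H4_symmetric(3) mult_ac)

lemma act4_traceless:
  fixes g :: "real^3^3"
  assumes X: "X \<in> H4" and g: "orthogonal_matrix g"
  shows "(\<Sum>i\<in>UNIV. act4 g X i i k l) = 0"
proof -
  have "(\<Sum>i\<in>UNIV. act4 g X i i k l) = (\<Sum>i\<in>UNIV. \<Sum>a\<in>UNIV. \<Sum>b\<in>UNIV. \<Sum>c\<in>UNIV. \<Sum>d\<in>UNIV.
      (g$i$a * g$i$b) * (g$k$c * g$l$d * X a b c d))"
    by (simp add: act4_def mult_ac)
  also have "\<dots> = (\<Sum>a\<in>UNIV. \<Sum>b\<in>UNIV. \<Sum>c\<in>UNIV. \<Sum>d\<in>UNIV. \<Sum>i\<in>UNIV.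
      (g$i$a * g$i$b) * (g$k$c * g$l$d * X a b c d))"
    by (rule sum_move_inside4)
  also have "\<dots> = (\<Sum>a\<in>UNIV. \<Sum>b\<in>UNIV. \<Sum>c\<in>UNIV. \<Sum>d\<in>UNIV.
      of_bool (a = b) * (g$k$c * g$l$d * X a b c d))"
    by (simp only: sum_distrib_right[symmetric] orthogonal_matrix_col_sum[OF g])
  also have "\<dots> = (\<Sum>a\<in>UNIV. \<Sum>c\<in>UNIV. \<Sum>d\<in>UNIV. g$k$c * g$l$d * X a a c d)"
    by (simp add: sum_distrib_left[symmetric])
  also have "\<dots> = (\<Sum>c\<in>UNIV. \<Sum>d\<in>UNIV. g$k$c * g$l$d * (\<Sum>a\<in>UNIV. X a a c d))"
    by (subst sum_move_inside2) (simp only: sum_distrib_left)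
  also have "\<dots> = 0" by (simp add: H4_traceless[OF X])
  finally show ?thesis .
qed

lemma act4_in_H4:
  assumes "X \<in> H4" "orthogonal_matrix g"
  shows "act4 g X \<in> H4"
  using act4_swap12[OF assms(1)] act4_swap23[OF assms(1)] act4_swap34[OF assms(1)]
    act4_traceless[OF assms]
  unfolding H4_def by auto

definition contract2 :: "tensor4 \<Rightarrow> real^3 \<Rightarrow> real^3^3" where
  "contract2 X w = (\<chi> i j. \<Sum>k\<in>UNIV. \<Sum>l\<in>UNIV. X i j k l * w$k * w$l)"

definition contract3 :: "tensor4 \<Rightarrow> real^3^3" where
  "contract3 X = (\<chi> i j. \<Sum>k\<in>UNIV. \<Sum>l\<in>UNIV. \<Sum>m\<in>UNIV. X i k l m * X j k l m)"

definition tensor_form :: "tensor4 \<Rightarrow> real^3 \<Rightarrow> real^3 \<Rightarrow> real^3 \<Rightarrow> real^3 \<Rightarrow> real" where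
  "tensor_form X x1 x2 x3 x4 =
     (\<Sum>i\<in>UNIV. \<Sum>j\<in>UNIV. \<Sum>k\<in>UNIV. \<Sum>l\<in>UNIV. X i j k l * x1$i * x2$j * x3$k * x4$l)"

lemma contract2_act4:
  fixes g :: "real^3^3"
  assumes g: "orthogonal_matrix g"
  shows "contract2 (act4 g X) (g *v w) = g ** contract2 X w ** transpose g"
proof -
  have "contract2 (act4 g X) (g *v w) $ i $ j = (g ** contract2 X w ** transpose g) $ i $ j" for i j
  proof -
    have "contract2 (act4 g X) (g *v w) $ i $ j = (\<Sum>k\<in>UNIV. \<Sum>l\<in>UNIV. \<Sum>a\<in>UNIV. \<Sum>b\<in>UNIV. \<Sum>c\<in>UNIV. \<Sum>d\<in>UNIV.
        g$i$a * g$j$b * X a b c d * ((g$k$c * (g *v w)$k) * (g$l$d * (g *v w)$l)))"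
      by (simp add: contract2_def act4_def sum_distrib_left sum_distrib_right mult_ac)
    also have "\<dots> = (\<Sum>a\<in>UNIV. \<Sum>b\<in>UNIV. \<Sum>c\<in>UNIV. \<Sum>d\<in>UNIV. \<Sum>k\<in>UNIV. \<Sum>l\<in>UNIV.
        g$i$a * g$j$b * X a b c d * ((g$k$c * (g *v w)$k) * (g$l$d * (g *v w)$l)))"
      by (rule trans[OF sum.cong[OF refl sum_move_inside4] sum_move_inside4])
    also have "\<dots> = (\<Sum>a\<in>UNIV. \<Sum>b\<in>UNIV. \<Sum>c\<in>UNIV. \<Sum>d\<in>UNIV. g$i$a * g$j$b * X a b c d * (w$c * w$d))"
      by (simp only: sum_factor2 orthogonal_matrix_col_sum_vec[OF g])
    also have "\<dots> = (g ** contract2 X w ** transpose g) $ i $ j"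
      by (subst sum.swap)
        (simp add: contract2_def matrix_matrix_mult_def transpose_def sum_distrib_left sum_distrib_right mult_ac)
    finally show ?thesis .
  qed
  thus ?thesis by (simp add: vec_eq_iff)
qed

lemma contract3_act4:
  fixes g :: "real^3^3"
  assumes g: "orthogonal_matrix g"
  shows "contract3 (act4 g X) = g ** contract3 X ** transpose g"
proof -
  have "contract3 (act4 g X) $ i $ j = (g ** contract3 X ** transpose g) $ i $ j" for i j
  proof -
    define A3 where "A3 = (\<lambda>i b c d. \<Sum>a\<in>UNIV. g$i$a * X a b c d)"
    define A2 where "A2 = (\<lambda>i b c m. \<Sum>d\<in>UNIV. g$m$d * A3 i b c d)"
    define A1 where "A1 = (\<lambda>i b l m. \<Sum>c\<in>UNIV. g$l$c * A2 i b c m)"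
    have act4_A1: "act4 g X i k l m = (\<Sum>b\<in>UNIV. g$k$b * A1 i b l m)" for i k l m
    proof -
      have "act4 g X i k l m
          = (\<Sum>b\<in>UNIV. \<Sum>c\<in>UNIV. \<Sum>d\<in>UNIV. \<Sum>a\<in>UNIV. g$k$b * (g$l$c * (g$m$d * (g$i$a * X a b c d))))"
        unfolding act4_def by (subst sum_move_inside3) (simp add: mult_ac)
      thus ?thesis by (simp add: A1_def A2_def A3_def sum_distrib_left)
    qed
    have "contract3 (act4 g X) $ i $ j
        = (\<Sum>l\<in>UNIV. \<Sum>m\<in>UNIV. \<Sum>k\<in>UNIV. act4 g X i k l m * act4 g X j k l m)"
      unfolding contract3_def vec_lambda_beta by (rule sum_move_inside2)
    also have "\<dots> = (\<Sum>l\<in>UNIV. \<Sum>m\<in>UNIV. \<Sum>b\<in>UNIV. A1 i b l m * A1 j b l m)"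
      by (simp only: act4_A1 orthogonal_matrix_col_sum_mult[OF g])
    also have "\<dots> = (\<Sum>m\<in>UNIV. \<Sum>b\<in>UNIV. \<Sum>l\<in>UNIV. A1 i b l m * A1 j b l m)"
      by (rule sum_move_inside2)
    also have "\<dots> = (\<Sum>m\<in>UNIV. \<Sum>b\<in>UNIV. \<Sum>c\<in>UNIV. A2 i b c m * A2 j b c m)"
      by (simp only: A1_def orthogonal_matrix_col_sum_mult[OF g])
    also have "\<dots> = (\<Sum>b\<in>UNIV. \<Sum>c\<in>UNIV. \<Sum>m\<in>UNIV. A2 i b c m * A2 j b c m)"
      by (rule sum_move_inside2)
    also have "\<dots> = (\<Sum>b\<in>UNIV. \<Sum>c\<in>UNIV. \<Sum>d\<in>UNIV. A3 i b c d * A3 j b c d)"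
      by (simp only: A2_def orthogonal_matrix_col_sum_mult[OF g])
    also have "\<dots> = (\<Sum>b\<in>UNIV. \<Sum>c\<in>UNIV. \<Sum>d\<in>UNIV. \<Sum>a\<in>UNIV. \<Sum>a'\<in>UNIV.
        g$i$a * g$j$a' * (X a b c d * X a' b c d))"
      by (simp add: A3_def sum_product mult_ac)
    also have "\<dots> = (\<Sum>a\<in>UNIV. \<Sum>a'\<in>UNIV. \<Sum>b\<in>UNIV. \<Sum>c\<in>UNIV. \<Sum>d\<in>UNIV.
        g$i$a * g$j$a' * (X a b c d * X a' b c d))"
      by (rule trans[OF sum_move_inside3[symmetric] sum.cong[OF refl sum_move_inside3[symmetric]]])
    also have "\<dots> = (g ** contract3 X ** transpose g) $ i $ j"
      by (subst sum.swap)
        (simp add: matrix_matrix_mult_def transpose_def contract3_def sum_distrib_left sum_distrib_right mult_ac)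
    finally show ?thesis .
  qed
  thus ?thesis by (simp add: vec_eq_iff)
qed

lemma tensor_form_act4:
  "tensor_form (act4 g X) x1 x2 x3 x4
     = tensor_form X (transpose g *v x1) (transpose g *v x2) (transpose g *v x3) (transpose g *v x4)"
proof -
  have "tensor_form (act4 g X) x1 x2 x3 x4 = (\<Sum>i\<in>UNIV. \<Sum>j\<in>UNIV. \<Sum>k\<in>UNIV. \<Sum>l\<in>UNIV.
      \<Sum>a\<in>UNIV. \<Sum>b\<in>UNIV. \<Sum>c\<in>UNIV. \<Sum>d\<in>UNIV.
      X a b c d * ((g$i$a * x1$i) * (g$j$b * x2$j) * (g$k$c * x3$k) * (g$l$d * x4$l)))"
    by (simp add: tensor_form_def act4_def sum_distrib_left sum_distrib_right mult_ac)
  also have "\<dots> = (\<Sum>a\<in>UNIV. \<Sum>b\<in>UNIV. \<Sum>c\<in>UNIV. \<Sum>d\<in>UNIV.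
      \<Sum>i\<in>UNIV. \<Sum>j\<in>UNIV. \<Sum>k\<in>UNIV. \<Sum>l\<in>UNIV.
      X a b c d * ((g$i$a * x1$i) * (g$j$b * x2$j) * (g$k$c * x3$k) * (g$l$d * x4$l)))"
    by (rule trans[OF sum.cong[OF refl, OF trans[OF sum.cong[OF refl,
          OF trans[OF sum.cong[OF refl sum_move_inside4]]]]]])
      (rule sum_move_inside4)+
  also have "\<dots> = tensor_form X (transpose g *v x1) (transpose g *v x2) (transpose g *v x3) (transpose g *v x4)"
    by (simp only: sum_factor4) (simp add: tensor_form_def matrix_vector_mult_def transpose_def mult_ac)
  finally show ?thesis .
qed

section \<open>Rotations and conjugation\<close>

lemma SO3D:
  assumes "g \<in> SO3"
  shows "orthogonal_matrix g" "det g = 1" "transpose g ** g = mat 1" "g ** transpose g = mat 1"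
    "rotation_matrix g"
  using assms by (auto simp: SO3_def orthogonal_matrix_def rotation_matrix_def)

lemma SO3_mat_1: "mat 1 \<in> SO3"
  unfolding SO3_def by (simp add: orthogonal_matrix_def)

lemma SO3_mult: "g \<in> SO3 \<Longrightarrow> h \<in> SO3 \<Longrightarrow> g ** h \<in> SO3"
  unfolding SO3_def by (simp add: orthogonal_matrix_mul det_mul)

lemma SO3_transpose: "g \<in> SO3 \<Longrightarrow> transpose g \<in> SO3"
  unfolding SO3_def by (simp add: orthogonal_matrix_def)

lemma conj_mult:
  assumes "g \<in> SO3"
  shows "(g ** A ** transpose g) ** (g ** B ** transpose g) = g ** (A ** B) ** transpose g"
proof -
  have "(g ** A ** transpose g) ** (g ** B ** transpose g) = g ** A ** (transpose g ** g) ** B ** transpose g"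
    by (simp add: matrix_mul_assoc)
  thus ?thesis by (simp add: SO3D[OF assms] matrix_mul_assoc)
qed

lemma conj_transpose_cancel:
  assumes "g \<in> SO3"
  shows "transpose g ** (g ** A ** transpose g) ** g = A"
proof -
  have "transpose g ** (g ** A ** transpose g) ** g = (transpose g ** g) ** A ** (transpose g ** g)"
    by (simp only: matrix_mul_assoc)
  thus ?thesis by (simp add: SO3D[OF assms])
qed

lemma conj_diff: "g ** (A - B) ** transpose g = g ** A ** transpose g - g ** B ** (transpose g :: real^3^3)"
  by (simp add: vec_eq_iff matrix_matrix_mult_def sum_subtractf ring_distribs)

definition commutator :: "real^3^3 \<Rightarrow> real^3^3 \<Rightarrow> real^3^3" where
  "commutator A B = A ** B - B ** A"

lemma commutator_conj:
  "g \<in> SO3 \<Longrightarrow> commutator (g ** A ** transpose g) (g ** B ** transpose g) = g ** commutator A B ** transpose g"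
  by (simp add: commutator_def conj_mult conj_diff)

lemma transpose_commutator: "transpose (commutator A B) = commutator (transpose B) (transpose A)"
  by (simp add: commutator_def transpose_def matrix_matrix_mult_def vec_eq_iff mult.commute)

lemma commutator_swap: "commutator B A = - commutator A B"
  by (simp add: commutator_def)

lemma commutator_uminus_left: "commutator (- A) B = - commutator A B"
  by (simp add: commutator_def vec_eq_iff matrix_matrix_mult_def sum_negf)

definition crossmat :: "real^3 \<Rightarrow> real^3^3" where
  "crossmat w = vector [vector [0, - w$3, w$2], vector [w$3, 0, - w$1], vector [- w$2, w$1, 0]]"

definition axial :: "real^3^3 \<Rightarrow> real^3" where
  "axial M = vector [M$3$2, M$1$3, M$2$1]"

lemma crossmat_mult_vec: "crossmat w *v x = cross3 w x"
  by (simp add: vec_eq_iff forall_3 cross3_def crossmat_def matrix_vector_mult_def sum_3 vector_3)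

lemma transpose_crossmat: "transpose (crossmat w) = - crossmat w"
  by (simp add: vec_eq_iff forall_3 crossmat_def transpose_def vector_3)

lemma axial_crossmat: "axial (crossmat w) = w"
  by (simp add: vec_eq_iff forall_3 crossmat_def axial_def vector_3)

lemma crossmat_axial:
  assumes "transpose M = - M"
  shows "crossmat (axial M) = M"
proof -
  have skew: "M$j$i = - M$i$j" for i j
    using arg_cong[OF assms, of "\<lambda>N. N$i$j"] by (simp add: transpose_def)
  have "M$i$i = 0" for i
    using skew[of i i] by simp
  with skew[of 1 2] skew[of 1 3] skew[of 2 3] show ?thesis
    by (simp add: vec_eq_iff forall_3 crossmat_def axial_def vector_3)
qed

lemma crossmat_rotation:
  assumes "g \<in> SO3"
  shows "crossmat (g *v w) = g ** crossmat w ** transpose g"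
proof -
  have "crossmat (g *v w) *v x = (g ** crossmat w ** transpose g) *v x" for x
  proof -
    have "crossmat (g *v w) *v x = cross3 (g *v w) (g *v (transpose g *v x))"
      by (simp only: crossmat_mult_vec matrix_vector_mul_assoc SO3D(4)[OF assms] matrix_vector_mul_lid)
    also have "\<dots> = g *v cross3 w (transpose g *v x)"
      by (rule cross_rotation_matrix[OF SO3D(5)[OF assms]])
    finally show ?thesis
      by (simp only: crossmat_mult_vec[symmetric] matrix_vector_mul_assoc matrix_mul_assoc)
  qed
  thus ?thesis by (simp add: matrix_eq)
qed

lemma axial_rotation:
  assumes "g \<in> SO3" "transpose M = - M"
  shows "axial (g ** M ** transpose g) = g *v axial M"
  using crossmat_rotation[OF assms(1), of "axial M"] crossmat_axial[OF assms(2)]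
  by (metis axial_crossmat)

section \<open>Polynomial covariants\<close>

lemma tpoly_sum: "finite A \<Longrightarrow> (\<And>a. a \<in> A \<Longrightarrow> tpoly (f a)) \<Longrightarrow> tpoly (\<lambda>X. \<Sum>a\<in>A. f a X)"
proof (induction A rule: finite_induct)
  case empty
  then show ?case using tpoly_const[of 0] by simp
next
  case (insert x F)
  then show ?case using tpoly_add[of "f x" "\<lambda>X. \<Sum>a\<in>F. f a X"] by simp
qed

lemma tpoly_cmult: "tpoly p \<Longrightarrow> tpoly (\<lambda>X. c * p X)"
  by (rule tpoly_mult[OF tpoly_const])

lemma tpoly_uminus: "tpoly p \<Longrightarrow> tpoly (\<lambda>X. - p X)"
  using tpoly_cmult[of p "-1"] by simp

lemma tpoly_diff: "tpoly p \<Longrightarrow> tpoly q \<Longrightarrow> tpoly (\<lambda>X. p X - q X)"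
  using tpoly_add[OF _ tpoly_uminus] by simp

lemma tpoly_mat_mult:
  "(\<And>i j. tpoly (\<lambda>X. A X $ i $ j)) \<Longrightarrow> (\<And>i j. tpoly (\<lambda>X. B X $ i $ j))
     \<Longrightarrow> tpoly (\<lambda>X. (A X ** B X) $ i $ j)"
  unfolding matrix_matrix_mult_def by (simp, intro tpoly_sum tpoly_mult, auto)

lemma tpoly_mat_vec:
  "(\<And>i j. tpoly (\<lambda>X. A X $ i $ j)) \<Longrightarrow> (\<And>i. tpoly (\<lambda>X. v X $ i))
     \<Longrightarrow> tpoly (\<lambda>X. (A X *v v X) $ i)"
  unfolding matrix_vector_mult_def by (simp, intro tpoly_sum tpoly_mult, auto)

lemma tpoly_commutator:
  "(\<And>i j. tpoly (\<lambda>X. A X $ i $ j)) \<Longrightarrow> (\<And>i j. tpoly (\<lambda>X. B X $ i $ j))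
     \<Longrightarrow> tpoly (\<lambda>X. commutator (A X) (B X) $ i $ j)"
  unfolding commutator_def by (simp, intro tpoly_diff tpoly_mat_mult)

lemma tpoly_vector3:
  "tpoly (\<lambda>X. f X $ 1) \<Longrightarrow> tpoly (\<lambda>X. f X $ 2) \<Longrightarrow> tpoly (\<lambda>X. f X $ 3) \<Longrightarrow> tpoly (\<lambda>X. f X $ (i::3))"
  using exhaust_3[of i] by auto

definition vector_covariant :: "(tensor4 \<Rightarrow> real^3) \<Rightarrow> bool" where
  "vector_covariant f \<longleftrightarrow>
     (\<forall>i. tpoly (\<lambda>X. f X $ i)) \<and> (\<forall>g\<in>SO3. \<forall>X\<in>H4. f (act4 g X) = g *v f X)"

definition matrix_covariant :: "(tensor4 \<Rightarrow> real^3^3) \<Rightarrow> bool" where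
  "matrix_covariant f \<longleftrightarrow>
     (\<forall>i j. tpoly (\<lambda>X. f X $ i $ j)) \<and> (\<forall>X\<in>H4. transpose (f X) = f X)
     \<and> (\<forall>g\<in>SO3. \<forall>X\<in>H4. f (act4 g X) = g ** f X ** transpose g)"

lemma Cov1_covariants: "Cov1 H = {f H | f. vector_covariant f}"
  unfolding Cov1_def vector_covariant_def by simp

lemma Cov2_covariants: "Cov2 H = {f H | f. matrix_covariant f}"
  unfolding Cov2_def matrix_covariant_def by simp

lemma vector_covariantD:
  assumes "vector_covariant f"
  shows "tpoly (\<lambda>X. f X $ i)" "g \<in> SO3 \<Longrightarrow> X \<in> H4 \<Longrightarrow> f (act4 g X) = g *v f X"
  using assms unfolding vector_covariant_def by auto

lemma matrix_covariantD:
  assumes "matrix_covariant f"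
  shows "tpoly (\<lambda>X. f X $ i $ j)" "X \<in> H4 \<Longrightarrow> transpose (f X) = f X"
    "g \<in> SO3 \<Longrightarrow> X \<in> H4 \<Longrightarrow> f (act4 g X) = g ** f X ** transpose g"
  using assms unfolding matrix_covariant_def by auto

lemma vector_covariantI:
  assumes "\<And>i. tpoly (\<lambda>X. f X $ i)" "\<And>g X. g \<in> SO3 \<Longrightarrow> X \<in> H4 \<Longrightarrow> f (act4 g X) = g *v f X"
  shows "vector_covariant f"
  using assms unfolding vector_covariant_def by auto

lemma matrix_covariantI:
  assumes "\<And>i j. tpoly (\<lambda>X. f X $ i $ j)" "\<And>X. X \<in> H4 \<Longrightarrow> transpose (f X) = f X"
    "\<And>g X. g \<in> SO3 \<Longrightarrow> X \<in> H4 \<Longrightarrow> f (act4 g X) = g ** f X ** transpose g"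
  shows "matrix_covariant f"
  using assms unfolding matrix_covariant_def by auto

lemma vector_covariant_zero: "vector_covariant (\<lambda>X. 0)"
  by (rule vector_covariantI) (simp_all add: tpoly_const)

lemma vector_covariant_add:
  assumes "vector_covariant f" "vector_covariant h"
  shows "vector_covariant (\<lambda>X. f X + h X)"
proof (rule vector_covariantI)
  show "tpoly (\<lambda>X. (f X + h X) $ i)" for i
    using tpoly_add[OF vector_covariantD(1)[OF assms(1)] vector_covariantD(1)[OF assms(2)]] by simp
qed (simp add: vector_covariantD[OF assms(1)] vector_covariantD[OF assms(2)] matrix_vector_right_distrib)

lemma vector_covariant_scaleR:
  assumes "vector_covariant f"
  shows "vector_covariant (\<lambda>X. c *\<^sub>R f X)"
proof (rule vector_covariantI)
  show "tpoly (\<lambda>X. (c *\<^sub>R f X) $ i)" for i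
    using tpoly_cmult[OF vector_covariantD(1)[OF assms]] by simp
qed (simp add: vector_covariantD[OF assms] matrix_vector_mult_scaleR)

lemma vector_covariant_cross3:
  assumes "vector_covariant f" "vector_covariant h"
  shows "vector_covariant (\<lambda>X. cross3 (f X) (h X))"
proof (rule vector_covariantI)
  have "tpoly (\<lambda>X. f X $ a * h X $ b)" for a b
    by (intro tpoly_mult vector_covariantD(1)[OF assms(1)] vector_covariantD(1)[OF assms(2)])
  then show "tpoly (\<lambda>X. cross3 (f X) (h X) $ i)" for i
    using exhaust_3[of i] by (auto simp: cross3_def intro!: tpoly_diff)
qed (use assms in \<open>simp add: vector_covariantD cross_rotation_matrix SO3D\<close>)

lemma vector_covariant_mat_vec:
  assumes A: "matrix_covariant A" and f: "vector_covariant f"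
  shows "vector_covariant (\<lambda>X. A X *v f X)"
proof (rule vector_covariantI)
  show "tpoly (\<lambda>X. (A X *v f X) $ i)" for i
    by (intro tpoly_mat_vec matrix_covariantD(1)[OF A] vector_covariantD(1)[OF f])
next
  fix g X assume g: "g \<in> SO3" and X: "X \<in> H4"
  have "A (act4 g X) *v f (act4 g X) = (g ** A X ** transpose g) *v (g *v f X)"
    by (simp add: matrix_covariantD(3)[OF A g X] vector_covariantD(2)[OF f g X])
  also have "\<dots> = g *v (A X *v f X)"
    by (simp add: matrix_vector_mul_assoc matrix_mul_assoc[symmetric] SO3D[OF g])
  finally show "A (act4 g X) *v f (act4 g X) = g *v (A X *v f X)" .
qed

lemma vector_covariant_axial_commutator:
  assumes A: "matrix_covariant A" and B: "matrix_covariant B"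
  shows "vector_covariant (\<lambda>X. axial (commutator (A X) (B X)))"
proof (rule vector_covariantI)
  show "tpoly (\<lambda>X. axial (commutator (A X) (B X)) $ i)" for i
    by (rule tpoly_vector3)
      (simp_all add: axial_def vector_3 tpoly_commutator matrix_covariantD(1)[OF A] matrix_covariantD(1)[OF B])
next
  fix g X assume g: "g \<in> SO3" and X: "X \<in> H4"
  have "transpose (commutator (A X) (B X)) = - commutator (A X) (B X)"
    unfolding transpose_commutator matrix_covariantD(2)[OF A X] matrix_covariantD(2)[OF B X]
    by (rule commutator_swap)
  then show "axial (commutator (A (act4 g X)) (B (act4 g X))) = g *v axial (commutator (A X) (B X))"
    by (simp add: matrix_covariantD(3)[OF A g X] matrix_covariantD(3)[OF B g X] commutator_conj[OF g]
        axial_rotation[OF g])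
qed

definition outer :: "real^3 \<Rightarrow> real^3 \<Rightarrow> real^3^3" where
  "outer v w = (\<chi> i j. v$i * w$j)"

lemma outer_conj: "g ** outer v w ** transpose g = outer (g *v v) (g *v w)"
proof -
  have "(g ** outer v w ** transpose g) $ i $ j = outer (g *v v) (g *v w) $ i $ j" for i j
  proof -
    have "(g ** outer v w ** transpose g) $ i $ j = (\<Sum>b\<in>UNIV. \<Sum>a\<in>UNIV. (g$i$a * v$a) * (g$j$b * w$b))"
      by (simp add: outer_def matrix_matrix_mult_def transpose_def sum_distrib_left sum_distrib_right mult_ac)
    also have "\<dots> = outer (g *v v) (g *v w) $ i $ j"
      by (simp add: outer_def matrix_vector_mult_def sum_product) (rule sum.swap)
    finally show ?thesis .
  qed
  then show ?thesis by (simp add: vec_eq_iff)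
qed

lemma matrix_covariant_outer:
  assumes f: "vector_covariant f"
  shows "matrix_covariant (\<lambda>X. outer (f X) (f X))"
proof (rule matrix_covariantI)
  show "tpoly (\<lambda>X. outer (f X) (f X) $ i $ j)" for i j
    unfolding outer_def by (simp add: tpoly_mult vector_covariantD(1)[OF f])
next
  show "transpose (outer (f X) (f X)) = outer (f X) (f X)" for X
    by (simp add: outer_def transpose_def vec_eq_iff mult.commute)
qed (simp add: outer_conj vector_covariantD(2)[OF f])

lemma matrix_covariant_contract2:
  assumes f: "vector_covariant f"
  shows "matrix_covariant (\<lambda>X. contract2 X (f X))"
proof (rule matrix_covariantI)
  show "tpoly (\<lambda>X. contract2 X (f X) $ i $ j)" for i j
    unfolding contract2_def by (simp, intro tpoly_sum tpoly_mult tpoly_coord vector_covariantD(1)[OF f]) auto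
next
  show "X \<in> H4 \<Longrightarrow> transpose (contract2 X (f X)) = contract2 X (f X)" for X
    by (simp add: contract2_def transpose_def vec_eq_iff H4_symmetric(1))
qed (simp add: vector_covariantD(2)[OF f] contract2_act4 SO3D(1))

lemma matrix_covariant_contract3: "matrix_covariant contract3"
proof (rule matrix_covariantI)
  show "tpoly (\<lambda>X. contract3 X $ i $ j)" for i j
    unfolding contract3_def by (simp, intro tpoly_sum tpoly_mult tpoly_coord) auto
next
  show "transpose (contract3 X) = contract3 X" for X
    by (simp add: contract3_def transpose_def vec_eq_iff mult.commute)
qed (simp add: contract3_act4 SO3D(1))

lemma matrix_covariant_commutator_crossmat:
  assumes f: "vector_covariant f" and A: "matrix_covariant A"
  shows "matrix_covariant (\<lambda>X. commutator (crossmat (f X)) (A X))"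
proof (rule matrix_covariantI)
  have "tpoly (\<lambda>X. crossmat (f X) $ i $ j)" for i j
    using exhaust_3[of i] exhaust_3[of j]
    by (auto simp: crossmat_def vector_3 intro!: tpoly_const vector_covariantD(1)[OF f] tpoly_uminus)
  then show "tpoly (\<lambda>X. commutator (crossmat (f X)) (A X) $ i $ j)" for i j
    by (intro tpoly_commutator matrix_covariantD(1)[OF A])
next
  fix X assume X: "X \<in> H4"
  show "transpose (commutator (crossmat (f X)) (A X)) = commutator (crossmat (f X)) (A X)"
    unfolding transpose_commutator transpose_crossmat matrix_covariantD(2)[OF A X]
      commutator_swap[of "A X"] commutator_uminus_left
    by simp
next
  fix g X assume "g \<in> SO3" "X \<in> H4"
  then show "commutator (crossmat (f (act4 g X))) (A (act4 g X)) = g ** commutator (crossmat (f X)) (A X) ** transpose g"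
    by (simp add: vector_covariantD(2)[OF f] matrix_covariantD(3)[OF A] crossmat_rotation commutator_conj)
qed

lemma Cov1I: "vector_covariant f \<Longrightarrow> f H \<in> Cov1 H"
  unfolding Cov1_covariants by blast

lemma Cov1E: "v \<in> Cov1 H \<Longrightarrow> (\<And>f. vector_covariant f \<Longrightarrow> v = f H \<Longrightarrow> P) \<Longrightarrow> P"
  unfolding Cov1_covariants by blast

lemma Cov2I: "matrix_covariant f \<Longrightarrow> f H \<in> Cov2 H"
  unfolding Cov2_covariants by blast

lemma Cov2E: "A \<in> Cov2 H \<Longrightarrow> (\<And>f. matrix_covariant f \<Longrightarrow> A = f H \<Longrightarrow> P) \<Longrightarrow> P"
  unfolding Cov2_covariants by blast

lemma subspace_Cov1: "subspace (Cov1 H)"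
proof -
  have "0 \<in> Cov1 H"
    using Cov1I[OF vector_covariant_zero] by simp
  moreover have "v + w \<in> Cov1 H" if "v \<in> Cov1 H" "w \<in> Cov1 H" for v w
    using that by (metis Cov1E Cov1I[OF vector_covariant_add])
  moreover have "c *\<^sub>R v \<in> Cov1 H" if "v \<in> Cov1 H" for c v
    using that by (metis Cov1E Cov1I[OF vector_covariant_scaleR])
  ultimately show ?thesis unfolding subspace_def by blast
qed

lemma Cov1_cross3:
  assumes "v \<in> Cov1 H" "w \<in> Cov1 H"
  shows "cross3 v w \<in> Cov1 H"
proof -
  obtain f h where "vector_covariant f" "v = f H" "vector_covariant h" "w = h H"
    using assms by (metis Cov1E)
  then show ?thesis using Cov1I[OF vector_covariant_cross3] by simp
qed

lemma Cov1_mat_vec: "A \<in> Cov2 H \<Longrightarrow> v \<in> Cov1 H \<Longrightarrow> A *v v \<in> Cov1 H"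
  by (auto elim!: Cov1E Cov2E intro!: Cov1I[OF vector_covariant_mat_vec, simplified])

lemma Cov1_axial_commutator: "A \<in> Cov2 H \<Longrightarrow> B \<in> Cov2 H \<Longrightarrow> axial (commutator A B) \<in> Cov1 H"
  by (auto elim!: Cov2E intro!: Cov1I[OF vector_covariant_axial_commutator, simplified])

lemma Cov2_symmetric: "H \<in> H4 \<Longrightarrow> A \<in> Cov2 H \<Longrightarrow> transpose A = A"
  by (auto elim!: Cov2E simp: matrix_covariantD(2))

lemma Cov2_outer: "v \<in> Cov1 H \<Longrightarrow> outer v v \<in> Cov2 H"
  by (metis Cov1E Cov2I[OF matrix_covariant_outer])

lemma Cov2_contract2: "v \<in> Cov1 H \<Longrightarrow> contract2 H v \<in> Cov2 H"
  by (metis Cov1E Cov2I[OF matrix_covariant_contract2])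

lemma Cov2_contract3: "contract3 H \<in> Cov2 H"
  by (rule Cov2I[OF matrix_covariant_contract3])

lemma Cov2_commutator_crossmat: "v \<in> Cov1 H \<Longrightarrow> A \<in> Cov2 H \<Longrightarrow> commutator (crossmat v) A \<in> Cov2 H"
  by (auto elim!: Cov1E Cov2E intro!: Cov2I[OF matrix_covariant_commutator_crossmat, simplified])

lemma Cov1_fixed:
  assumes "H \<in> H4" "g \<in> SO3" "act4 g H = H" "v \<in> Cov1 H"
  shows "g *v v = v"
  using assms(4) by (rule Cov1E) (metis assms(1-3) vector_covariantD(2))

lemma Cov1_act4:
  assumes "g \<in> SO3" "H \<in> H4"
  shows "Cov1 (act4 g H) = (\<lambda>v. g *v v) ` Cov1 H"
  unfolding Cov1_covariants using vector_covariantD(2)[OF _ assms] by auto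

lemma Cov2_act4:
  assumes "g \<in> SO3" "H \<in> H4"
  shows "Cov2 (act4 g H) = (\<lambda>A. g ** A ** transpose g) ` Cov2 H"
  unfolding Cov2_covariants using matrix_covariantD(3)[OF _ assms] by auto

section \<open>Commuting symmetric matrices\<close>

lemma quadratic_nonpos_imp_linear_coeff_zero:
  fixes b c :: real
  assumes "\<And>t. 2*t*b + t^2*c \<le> 0"
  shows "b = 0"
proof -
  define r where "r = \<bar>c\<bar> + 1"
  have r: "r > 0" "2 * r + c > 0" unfolding r_def by auto
  have "(2 * (b / r) * b + (b / r)^2 * c) * r^2 \<le> 0"
    by (rule mult_nonpos_nonneg[OF assms]) simp
  moreover have "(2 * (b / r) * b + (b / r)^2 * c) * r^2 = b * b * (2 * r + c)"
    using r by (simp add: field_simps power2_eq_square)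
  ultimately have "b * b * (2 * r + c) \<le> 0"
    by simp
  then have "b * b \<le> 0"
    using r(2) by (simp add: mult_le_0_iff)
  thus ?thesis by (simp add: mult_le_0_iff) linarith
qed

lemma symmetric_matrix_inner:
  fixes A :: "real^'n^'n"
  assumes "transpose A = A"
  shows "x \<bullet> (A *v y) = (A *v x) \<bullet> y"
  by (metis assms dot_lmul_matrix transpose_matrix_vector)

lemma Rayleigh_maximizer_eigenvector:
  fixes A :: "real^'n^'n"
  assumes sym: "transpose A = A" and L: "subspace L" and inv: "\<And>x. x \<in> L \<Longrightarrow> A *v x \<in> L"
    and x: "x \<in> L" "norm x = 1"
    and max: "\<And>z. z \<in> L \<Longrightarrow> norm z = 1 \<Longrightarrow> z \<bullet> (A *v z) \<le> x \<bullet> (A *v x)"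
  shows "A *v x = (x \<bullet> (A *v x)) *\<^sub>R x"
proof -
  define m where "m = x \<bullet> (A *v x)"
  have bound: "z \<bullet> (A *v z) \<le> m * (z \<bullet> z)" if "z \<in> L" for z
  proof (cases "z = 0")
    case False
    then have "((1 / norm z) *\<^sub>R z) \<bullet> (A *v ((1 / norm z) *\<^sub>R z)) \<le> m"
      using max[of "(1 / norm z) *\<^sub>R z"] that L unfolding m_def by (simp add: subspace_scale)
    then have "(z \<bullet> (A *v z)) / (norm z)^2 \<le> m"
      by (simp add: matrix_vector_mult_scaleR power2_eq_square)
    with False show ?thesis by (simp add: divide_le_eq power2_norm_eq_inner)
  qed simp
  have xx: "x \<bullet> x = 1" using x(2) by (simp add: norm_eq_1)
  define y where "y = A *v x - m *\<^sub>R x"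
  have yL: "y \<in> L"
    unfolding y_def using inv[OF x(1)] x(1) L by (simp add: subspace_diff subspace_scale)
  have "y \<bullet> x = (A *v x) \<bullet> x - m * (x \<bullet> x)"
    unfolding y_def by (simp add: inner_diff_left)
  then have yx: "y \<bullet> x = 0"
    using xx unfolding m_def by (simp add: inner_commute)
  have "2*t*(y \<bullet> (A *v x)) + t^2*(y \<bullet> (A *v y) - m * (y \<bullet> y)) \<le> 0" for t
  proof -
    have "(x + t *\<^sub>R y) \<bullet> (A *v (x + t *\<^sub>R y)) \<le> m * ((x + t *\<^sub>R y) \<bullet> (x + t *\<^sub>R y))"
      using bound x(1) yL L by (simp add: subspace_add subspace_scale)
    then show ?thesis
      using xx yx unfolding m_def
      by (simp add: inner_add_left inner_add_right matrix_vector_right_distrib matrix_vector_mult_scaleR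
          symmetric_matrix_inner[OF sym, of x y] inner_commute power2_eq_square algebra_simps)
  qed
  then have "y \<bullet> (A *v x) = 0"
    by (rule quadratic_nonpos_imp_linear_coeff_zero)
  moreover have "y \<bullet> (A *v x) = y \<bullet> y"
    using yx unfolding y_def by (simp add: inner_diff_left inner_diff_right algebra_simps)
  ultimately show ?thesis
    unfolding y_def m_def by simp
qed

lemma symmetric_eigenvector_exists:
  fixes A :: "real^'n^'n"
  assumes sym: "transpose A = A" and L: "subspace L" "L \<noteq> {0}" and inv: "\<And>x. x \<in> L \<Longrightarrow> A *v x \<in> L"
  obtains x where "x \<in> L" "norm x = 1" "A *v x = (x \<bullet> (A *v x)) *\<^sub>R x"
proof -
  define K where "K = L \<inter> sphere 0 1"
  have "compact K" unfolding K_def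
    by (intro closed_Int_compact closed_subspace L(1) compact_sphere)
  obtain y where y: "y \<in> L" "y \<noteq> 0" using L subspace_0 by blast
  have "(1 / norm y) *\<^sub>R y \<in> K" using y L(1) unfolding K_def by (simp add: subspace_scale)
  hence "K \<noteq> {}" by blast
  have "continuous_on K (\<lambda>x. x \<bullet> (A *v x))"
    by (intro continuous_intros linear_continuous_on matrix_vector_mul_linear)
  then obtain x where "x \<in> K" and "\<And>z. z \<in> K \<Longrightarrow> z \<bullet> (A *v z) \<le> x \<bullet> (A *v x)"
    using continuous_attains_sup[OF \<open>compact K\<close> \<open>K \<noteq> {}\<close>] by blast
  with Rayleigh_maximizer_eigenvector[OF sym L(1) inv] that show thesis
    unfolding K_def by auto
qed

definition commuting :: "('a::semiring_1^'n^'n) set \<Rightarrow> bool" where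
  "commuting W \<longleftrightarrow> (\<forall>A\<in>W. \<forall>B\<in>W. A ** B = B ** A)"

definition nonzero_invariant_subspace :: "(real^'n^'n) set \<Rightarrow> (real^'n) set \<Rightarrow> bool" where
  "nonzero_invariant_subspace F L \<longleftrightarrow> subspace L \<and> L \<noteq> {0} \<and> (\<forall>A\<in>F. \<forall>x\<in>L. A *v x \<in> L)"

text \<open>An invariant subspace of least dimension consists of common eigenvectors: each
  eigenspace of a member of the family cut down to it is again invariant.\<close>

lemma common_eigenvector_exists:
  fixes F :: "(real^'n^'n) set"
  assumes sym: "\<And>A. A \<in> F \<Longrightarrow> transpose A = A" and comm: "commuting F"
    and M: "nonzero_invariant_subspace F M"
  obtains x where "x \<in> M" "norm x = 1" "\<And>A. A \<in> F \<Longrightarrow> \<exists>c. A *v x = c *\<^sub>R x"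
proof -
  define n where "n = (LEAST n. \<exists>L. nonzero_invariant_subspace F L \<and> L \<subseteq> M \<and> dim L = n)"
  have "\<exists>L. nonzero_invariant_subspace F L \<and> L \<subseteq> M \<and> dim L = n"
    unfolding n_def by (rule LeastI_ex) (use M in blast)
  then obtain L where PL: "nonzero_invariant_subspace F L" "L \<subseteq> M" and dL: "dim L = n"
    by blast
  have minimal: "dim L \<le> dim L'" if "nonzero_invariant_subspace F L'" "L' \<subseteq> M" for L'
    unfolding dL n_def by (rule Least_le) (use that in blast)
  have L: "subspace L" "L \<noteq> {0}" and Linv: "\<And>A x. A \<in> F \<Longrightarrow> x \<in> L \<Longrightarrow> A *v x \<in> L"
    using PL unfolding nonzero_invariant_subspace_def by auto
  have scalar: "\<exists>c. \<forall>x\<in>L. A *v x = c *\<^sub>R x" if AF: "A \<in> F" for A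
  proof -
    obtain x0 where x0: "x0 \<in> L" "norm x0 = 1" "A *v x0 = (x0 \<bullet> (A *v x0)) *\<^sub>R x0"
      using symmetric_eigenvector_exists[OF sym[OF AF] L Linv[OF AF]] by blast
    define L' where "L' = {x \<in> L. A *v x = (x0 \<bullet> (A *v x0)) *\<^sub>R x}"
    have "subspace L'" unfolding L'_def subspace_def using L(1)
      by (auto simp: subspace_0 subspace_add subspace_scale matrix_vector_right_distrib
          matrix_vector_mult_scaleR scaleR_add_right)
    moreover have "L' \<noteq> {0}"
    proof -
      have "x0 \<in> L'" "x0 \<noteq> 0"
        using x0 unfolding L'_def by auto
      then show ?thesis by blast
    qed
    moreover have "B *v x \<in> L'" if B: "B \<in> F" and x: "x \<in> L'" for B x
    proof -
      have "A *v (B *v x) = B *v (A *v x)"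
        using comm AF B unfolding commuting_def by (simp add: matrix_vector_mul_assoc)
      with x Linv[OF B] show ?thesis
        unfolding L'_def by (simp add: matrix_vector_mult_scaleR)
    qed
    ultimately have "nonzero_invariant_subspace F L'" "L' \<subseteq> M"
      using PL(2) unfolding nonzero_invariant_subspace_def L'_def by auto
    then have "dim L \<le> dim L'" by (rule minimal)
    moreover have "L' \<subseteq> L" unfolding L'_def by auto
    ultimately have "L' = L" using subspace_dim_equal[OF \<open>subspace L'\<close> L(1)] by simp
    thus ?thesis unfolding L'_def by blast
  qed
  obtain y where y: "y \<in> L" "y \<noteq> 0" using L subspace_0 by blast
  define x where "x = (1 / norm y) *\<^sub>R y"
  have "x \<in> L" unfolding x_def using y L(1) by (simp add: subspace_scale)
  moreover have "norm x = 1" unfolding x_def using y by simp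
  ultimately show thesis
    using that scalar PL(2) by blast
qed

lemma unit_orthogonal_exists:
  fixes n :: "real^3"
  obtains u where "norm u = 1" "u \<bullet> n = 0"
proof (cases "n = 0")
  case True
  then show thesis using that[of "axis 1 1"] by simp
next
  case False
  then obtain k where w: "cross3 n (axis k 1) \<noteq> 0"
    using cross_basis_nonzero by blast
  show thesis
    using that[of "(1 / norm (cross3 n (axis k 1))) *\<^sub>R cross3 n (axis k 1)"] w
    by (simp add: dot_cross_self)
qed

lemma norm_cross3_orthonormal:
  assumes "norm e = 1" "norm a = 1" "e \<bullet> a = 0"
  shows "norm (cross3 e a) = 1"
proof -
  have "(norm (cross3 e a))^2 = 1^2"
    using norm_cross_dot[of e a] assms by simp
  then show ?thesis by (simp only: power2_eq_iff_nonneg norm_ge_zero zero_le_one)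
qed

lemma orthogonal_to_orthonormal_pair:
  assumes "norm e = 1" "norm a = 1" "e \<bullet> a = 0" "z \<bullet> e = 0" "z \<bullet> a = 0"
  shows "z = (z \<bullet> cross3 e a) *\<^sub>R cross3 e a"
proof -
  define b where "b = cross3 e a"
  have bb: "b \<bullet> b = 1"
    using norm_cross3_orthonormal[OF assms(1-3)] unfolding b_def by (simp add: norm_eq_1)
  have "cross3 z b = 0"
    unfolding b_def using assms(4,5) by (simp add: Lagrange)
  then have "(b \<bullet> b) *\<^sub>R z - (b \<bullet> z) *\<^sub>R b = 0"
    using Lagrange[of b z b] by simp
  then show ?thesis
    using bb unfolding b_def by (simp add: inner_commute)
qed

definition frame :: "real^3 \<Rightarrow> real^3 \<Rightarrow> real^3^3" where
  "frame u n = vector [u, cross3 n u, n]"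

lemma frame_rows: "frame u n $ 1 = u" "frame u n $ 2 = cross3 n u" "frame u n $ 3 = n"
  by (simp_all add: frame_def vector_3)

lemma frame_SO3:
  assumes "norm u = 1" "norm n = 1" "u \<bullet> n = 0"
  shows "frame u n \<in> SO3"
proof -
  have nu: "norm (cross3 n u) = 1"
    by (rule norm_cross3_orthonormal) (use assms in \<open>auto simp: inner_commute\<close>)
  have rows: "row i (frame u n) = frame u n $ i" for i
    by (simp add: row_def vec_eq_iff)
  have "orthogonal_matrix (frame u n)"
    unfolding orthogonal_matrix_orthonormal_rows rows
  proof (intro conjI allI impI)
    fix i :: 3
    show "norm (frame u n $ i) = 1"
      using exhaust_3[of i] assms nu by (auto simp: frame_rows)
  next
    fix i j :: 3
    assume "i \<noteq> j"
    then show "orthogonal (frame u n $ i) (frame u n $ j)"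
      using exhaust_3[of i] exhaust_3[of j] assms
      by (auto simp: frame_rows orthogonal_def dot_cross_self inner_commute)
  qed
  moreover have "det (frame u n) = 1"
    using assms
    by (simp add: dot_cross_det[symmetric] frame_def cross_skew[of "cross3 n u"] Lagrange
        inner_diff_right inner_commute norm_eq_1)
  ultimately show ?thesis
    unfolding SO3_def by simp
qed

lemma frame_mult_vec:
  assumes "norm u = 1" "norm n = 1" "u \<bullet> n = 0"
  shows "frame u n *v n = axis 3 1" "frame u n *v u = axis 1 1"
  using assms
  by (auto simp: vec_eq_iff forall_3 matrix_vector_mul_component frame_rows axis_def
      dot_cross_self inner_commute norm_eq_1)

lemma frame_transpose_mult_vec:
  "transpose (frame u n) *v vector [c, s, 0] = c *\<^sub>R u + s *\<^sub>R cross3 n u"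
  by (simp add: vec_eq_iff matrix_vector_mult_def transpose_def sum_3 frame_rows vector_3 mult.commute)

lemma conj_entry: "(Q ** A ** transpose Q) $ i $ j = (Q$i) \<bullet> (A *v (Q$j))"
proof -
  have "(Q ** A ** transpose Q) $ i $ j = (\<Sum>k\<in>UNIV. \<Sum>l\<in>UNIV. Q$i$l * (A$l$k * Q$j$k))"
    by (simp add: matrix_matrix_mult_def transpose_def sum_distrib_right sum_distrib_left mult_ac)
  also have "\<dots> = (Q$i) \<bullet> (A *v (Q$j))"
    by (subst sum.swap) (simp add: inner_vec_def matrix_vector_mult_def sum_distrib_left)
  finally show ?thesis .
qed

definition diagonal :: "('a::zero^'n^'n) \<Rightarrow> bool" where
  "diagonal A \<longleftrightarrow> (\<forall>i j. i \<noteq> j \<longrightarrow> A$i$j = 0)"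

lemma commuting_symmetric_diagonalizable:
  fixes F :: "(real^3^3) set"
  assumes sym: "\<And>A. A \<in> F \<Longrightarrow> transpose A = A" and comm: "commuting F"
  obtains Q where "Q \<in> SO3" "\<And>A. A \<in> F \<Longrightarrow> diagonal (Q ** A ** transpose Q)"
proof -
  have "nonzero_invariant_subspace F UNIV"
    unfolding nonzero_invariant_subspace_def using axis_eq_0_iff[of 1 "1::real"] by auto
  then obtain e where e: "norm e = 1" and e_eig: "\<And>A. A \<in> F \<Longrightarrow> \<exists>c. A *v e = c *\<^sub>R e"
    using common_eigenvector_exists[OF sym comm] by metis
  define P where "P = {x::real^3. x \<bullet> e = 0}"
  obtain u where "norm u = 1" "u \<bullet> e = 0"
    using unit_orthogonal_exists by blast
  then have "u \<in> P" "u \<noteq> 0" unfolding P_def by auto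
  moreover have "A *v x \<in> P" if "A \<in> F" "x \<in> P" for A x
    using e_eig[OF that(1)] that unfolding P_def
    by (auto simp: inner_commute[of _ e] symmetric_matrix_inner[OF sym[OF that(1)]])
  moreover have "subspace P"
    unfolding P_def subspace_def by (auto simp: inner_add_left)
  ultimately have "nonzero_invariant_subspace F P"
    unfolding nonzero_invariant_subspace_def by blast
  then obtain a where "a \<in> P" and a: "norm a = 1" and a_eig: "\<And>A. A \<in> F \<Longrightarrow> \<exists>c. A *v a = c *\<^sub>R a"
    using common_eigenvector_exists[OF sym comm] by metis
  then have ae: "a \<bullet> e = 0" unfolding P_def by simp
  have b_eig: "\<exists>c. A *v cross3 e a = c *\<^sub>R cross3 e a" if A: "A \<in> F" for A
  proof -
    obtain c d where c: "A *v e = c *\<^sub>R e" and d: "A *v a = d *\<^sub>R a"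
      using e_eig[OF A] a_eig[OF A] by blast
    have "(A *v cross3 e a) \<bullet> e = 0" "(A *v cross3 e a) \<bullet> a = 0"
      by (simp_all add: symmetric_matrix_inner[OF sym[OF A], symmetric] c d dot_cross_self)
    then show ?thesis
      using orthogonal_to_orthonormal_pair[OF e a] ae by (metis inner_commute)
  qed
  define Q where "Q = frame a e"
  have eig: "\<exists>c. A *v (Q$j) = c *\<^sub>R (Q$j)" if "A \<in> F" for A j
    using exhaust_3[of j] e_eig[OF that] a_eig[OF that] b_eig[OF that]
    unfolding Q_def by (auto simp: frame_rows)
  have orth: "Q$i \<bullet> Q$j = 0" if "i \<noteq> j" for i j
    using exhaust_3[of i] exhaust_3[of j] that ae unfolding Q_def
    by (auto simp: frame_rows dot_cross_self inner_commute)
  have "diagonal (Q ** A ** transpose Q)" if "A \<in> F" for A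
    unfolding diagonal_def conj_entry
    using eig[OF that] orth by (metis inner_scaleR_right mult_zero_right)
  moreover have "Q \<in> SO3"
    unfolding Q_def using frame_SO3[OF a e ae] .
  ultimately show thesis using that by blast
qed

section \<open>Symmetry groups of sets of symmetric matrices\<close>

lemma conjg_transpose_conjg: "g \<in> SO3 \<Longrightarrow> conjg (transpose g) (conjg g S) = S"
  unfolding conjg_def image_image by (simp add: conj_transpose_cancel)

lemma conj_transpose_conj: "g \<in> SO3 \<Longrightarrow> g ** (transpose g ** A ** g) ** transpose g = A"
  using conj_transpose_cancel[OF SO3_transpose] by simp

lemma symgroup_conj:
  assumes g: "g \<in> SO3"
  shows "symgroup ((\<lambda>A. g ** A ** transpose g) ` W) = conjg g (symgroup W)"
proof -
  have conj_conj: "(g ** h ** transpose g) ** (g ** A ** transpose g) ** transpose (g ** h ** transpose g)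
      = g ** (h ** A ** transpose h) ** transpose g" for h A
  proof -
    have "transpose (g ** h ** transpose g) = g ** transpose h ** transpose g"
      by (simp add: matrix_transpose_mul matrix_mul_assoc)
    then show ?thesis by (simp only: conj_mult[OF g])
  qed
  have fixes_iff: "(g ** h ** transpose g) ** (g ** A ** transpose g) ** transpose (g ** h ** transpose g)
      = g ** A ** transpose g \<longleftrightarrow> h ** A ** transpose h = A" for h A
    unfolding conj_conj by (metis conj_transpose_cancel[OF g])
  have SO3_iff: "g ** h ** transpose g \<in> SO3 \<longleftrightarrow> h \<in> SO3" for h
    by (metis SO3_mult SO3_transpose g conj_transpose_cancel transpose_transpose)
  have "k \<in> symgroup ((\<lambda>A. g ** A ** transpose g) ` W) \<longleftrightarrow> k \<in> conjg g (symgroup W)" for k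
  proof -
    define m where "m = transpose g ** k ** g"
    have k: "k = g ** m ** transpose g"
      unfolding m_def by (rule conj_transpose_conj[OF g, symmetric])
    have "k \<in> symgroup ((\<lambda>A. g ** A ** transpose g) ` W) \<longleftrightarrow> m \<in> symgroup W"
      unfolding k symgroup_def by (simp add: SO3_iff fixes_iff)
    also have "\<dots> \<longleftrightarrow> k \<in> conjg g (symgroup W)"
    proof
      assume "m \<in> symgroup W"
      then show "k \<in> conjg g (symgroup W)" unfolding conjg_def k by blast
    next
      assume "k \<in> conjg g (symgroup W)"
      then obtain h where "h \<in> symgroup W" "k = g ** h ** transpose g"
        unfolding conjg_def by blast
      then show "m \<in> symgroup W" unfolding m_def by (simp add: conj_transpose_cancel[OF g])
    qed
    finally show ?thesis .
  qed
  then show ?thesis by blast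
qed

lemma mat_1_diag3: "mat 1 = diag3 1 1 1"
  by (simp add: vec_eq_iff forall_3 mat_def diag3_def vector_3)

lemma diag3_SO3: "a*a = 1 \<Longrightarrow> b*b = 1 \<Longrightarrow> c*c = 1 \<Longrightarrow> a*b*c = 1 \<Longrightarrow> diag3 a b c \<in> SO3"
  unfolding SO3_def orthogonal_matrix_def
  by (simp add: vec_eq_iff forall_3 matrix_matrix_mult_def transpose_def sum_3 diag3_def vector_3 mat_def det_3)

lemma D2_SO3: "D2 \<subseteq> SO3"
  unfolding D2_def by (auto simp: mat_1_diag3 intro: diag3_SO3)

lemma diag3_conj_entry:
  "(diag3 a b c ** A ** transpose (diag3 a b c)) $ i $ j
     = (vector [a,b,c] :: real^3) $ i * (vector [a,b,c] :: real^3) $ j * A$i$j"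
  using exhaust_3[of i] exhaust_3[of j]
  by (auto simp: matrix_matrix_mult_def transpose_def diag3_def sum_3 vector_3)

lemma diagonal_if_fixed_by_half_turns:
  assumes "diag3 1 (-1) (-1) ** A ** transpose (diag3 1 (-1) (-1)) = A"
    and "diag3 (-1) 1 (-1) ** A ** transpose (diag3 (-1) 1 (-1)) = A"
  shows "diagonal A"
proof -
  have h1: "(vector [1, -1, -1] :: real^3) $ i * (vector [1, -1, -1] :: real^3) $ j * A$i$j = A$i$j"
    and h2: "(vector [-1, 1, -1] :: real^3) $ i * (vector [-1, 1, -1] :: real^3) $ j * A$i$j = A$i$j" for i j
    by (simp_all only: diag3_conj_entry[symmetric] assms)
  have "A$i$j = 0" if "i \<noteq> j" for i j
    using h1[of i j] h2[of i j] that exhaust_3[of i] exhaust_3[of j] by (auto simp: vector_3)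
  then show ?thesis
    unfolding diagonal_def by blast
qed

lemma D2_subset_symgroup_iff: "D2 \<subseteq> symgroup W \<longleftrightarrow> (\<forall>A\<in>W. diagonal A)"
proof
  assume "D2 \<subseteq> symgroup W"
  then have "diag3 1 (-1) (-1) \<in> symgroup W" "diag3 (-1) 1 (-1) \<in> symgroup W"
    unfolding D2_def by auto
  then show "\<forall>A\<in>W. diagonal A"
    unfolding symgroup_def by (auto intro: diagonal_if_fixed_by_half_turns)
next
  assume diag: "\<forall>A\<in>W. diagonal A"
  have "diag3 a b c ** A ** transpose (diag3 a b c) = A"
    if A: "A \<in> W" and "a*a = 1" "b*b = 1" "c*c = 1" for a b c A
  proof -
    have sq: "(vector [a,b,c] :: real^3) $ i * (vector [a,b,c] :: real^3) $ i = 1" for i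
      using exhaust_3[of i] that(2-4) by (auto simp: vector_3)
    have off: "A$i$j = 0" if "i \<noteq> j" for i j
      using diag A that unfolding diagonal_def by blast
    have "(vector [a,b,c] :: real^3) $ i * (vector [a,b,c] :: real^3) $ j * A$i$j = A$i$j" for i j
      by (cases "i = j") (simp_all add: sq off)
    then show ?thesis
      by (simp add: vec_eq_iff diag3_conj_entry)
  qed
  then show "D2 \<subseteq> symgroup W"
    using D2_SO3 unfolding D2_def symgroup_def by (auto simp: mat_1_diag3)
qed

lemma diagonal_commute:
  fixes A B :: "real^3^3"
  assumes "diagonal A" "diagonal B"
  shows "A ** B = B ** A"
proof -
  have "A$1$2 = 0" "A$1$3 = 0" "A$2$1 = 0" "A$2$3 = 0" "A$3$1 = 0" "A$3$2 = 0"
    "B$1$2 = 0" "B$1$3 = 0" "B$2$1 = 0" "B$2$3 = 0" "B$3$1 = 0" "B$3$2 = 0"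
    using assms unfolding diagonal_def by auto
  then show ?thesis
    by (simp add: vec_eq_iff forall_3 matrix_matrix_mult_def sum_3 mult.commute)
qed

lemma commuting_conj_iff:
  assumes "g \<in> SO3"
  shows "commuting ((\<lambda>A. g ** A ** transpose g) ` W) \<longleftrightarrow> commuting W"
  unfolding commuting_def
  by (auto simp: conj_mult[OF assms]) (metis conj_transpose_cancel[OF assms])

lemma conjg_subset_iff:
  assumes g: "g \<in> SO3"
  shows "conjg g A \<subseteq> B \<longleftrightarrow> A \<subseteq> conjg (transpose g) B"
proof
  assume "conjg g A \<subseteq> B"
  then have "conjg (transpose g) (conjg g A) \<subseteq> conjg (transpose g) B"
    unfolding conjg_def by (rule image_mono)
  then show "A \<subseteq> conjg (transpose g) B"
    by (simp add: conjg_transpose_conjg[OF g])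
next
  assume "A \<subseteq> conjg (transpose g) B"
  then have "conjg g A \<subseteq> conjg g (conjg (transpose g) B)"
    unfolding conjg_def by (rule image_mono)
  then show "conjg g A \<subseteq> B"
    using conjg_transpose_conjg[OF SO3_transpose[OF g]] by simp
qed

lemma orthotropic_iff_diagonalizable:
  "(\<exists>g\<in>SO3. conjg g D2 \<subseteq> symgroup W) \<longleftrightarrow> (\<exists>Q\<in>SO3. \<forall>A\<in>W. diagonal (Q ** A ** transpose Q))"
proof -
  have "conjg (transpose Q) D2 \<subseteq> symgroup W \<longleftrightarrow> (\<forall>A\<in>W. diagonal (Q ** A ** transpose Q))"
    if Q: "Q \<in> SO3" for Q
    using conjg_subset_iff[OF SO3_transpose[OF Q]] symgroup_conj[OF Q, symmetric]
      D2_subset_symgroup_iff[of "(\<lambda>A. Q ** A ** transpose Q) ` W"] by simp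
  then show ?thesis
    by (metis SO3_transpose transpose_transpose)
qed

lemma commuting_iff_orthotropic:
  assumes sym: "\<And>A. A \<in> W \<Longrightarrow> transpose A = A"
  shows "commuting W \<longleftrightarrow> (\<exists>g\<in>SO3. conjg g D2 \<subseteq> symgroup W)"
  unfolding orthotropic_iff_diagonalizable
proof
  assume "commuting W"
  then show "\<exists>Q\<in>SO3. \<forall>A\<in>W. diagonal (Q ** A ** transpose Q)"
    using commuting_symmetric_diagonalizable sym by metis
next
  assume "\<exists>Q\<in>SO3. \<forall>A\<in>W. diagonal (Q ** A ** transpose Q)"
  then obtain Q where "Q \<in> SO3" "\<forall>A\<in>W. diagonal (Q ** A ** transpose Q)"
    by blast
  then show "commuting W"
    using commuting_conj_iff[of Q W] unfolding commuting_def by (auto intro: diagonal_commute)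
qed

lemma symgroup_commute:
  assumes "k \<in> symgroup W" "A \<in> W"
  shows "k ** A = A ** k"
proof -
  have k: "k \<in> SO3" "k ** A ** transpose k = A"
    using assms unfolding symgroup_def by auto
  then have "k ** A = k ** A ** (transpose k ** k)"
    by (simp add: SO3D)
  also have "\<dots> = A ** k"
    using k(2) by (simp add: matrix_mul_assoc)
  finally show ?thesis .
qed

lemma symgroup_fixing_all_projections:
  assumes "\<And>w. outer w w \<in> W"
  shows "symgroup W = {mat 1}"
proof (intro set_eqI iffI)
  fix k assume k: "k \<in> symgroup W"
  have e: "(k ** outer w w) $ i $ j = (outer w w ** k) $ i $ j" for w i j
    using symgroup_commute[OF k assms] by simp
  have off: "k$2$1 = 0" "k$3$1 = 0" "k$1$2 = 0" "k$1$3 = 0" "k$3$2 = 0" "k$2$3 = 0"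
    using e[of "axis 1 1" 2 1] e[of "axis 1 1" 3 1] e[of "axis 1 1" 1 2] e[of "axis 1 1" 1 3]
      e[of "axis 2 1" 3 2] e[of "axis 2 1" 2 3]
    by (simp_all add: matrix_matrix_mult_def sum_3 outer_def axis_def)
  have diag: "k$1$1 = k$2$2" "k$1$1 = k$3$3"
    using e[of "axis 1 1 + axis 2 1" 1 2] e[of "axis 1 1 + axis 3 1" 1 3]
    by (simp_all add: matrix_matrix_mult_def sum_3 outer_def axis_def off)
  have kS: "k \<in> SO3" using k unfolding symgroup_def by auto
  have "(k ** transpose k) $ 1 $ 1 = 1"
    using SO3D(4)[OF kS] by (simp add: mat_def)
  then have "k$1$1 * k$1$1 = 1"
    by (simp add: matrix_matrix_mult_def transpose_def sum_3 off)
  moreover have "det k = k$1$1 * k$1$1 * k$1$1"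
    using off diag by (simp add: det_3)
  ultimately have "k$1$1 = 1"
    using SO3D(2)[OF kS] by simp
  then show "k \<in> {mat 1}"
    using off diag by (simp add: vec_eq_iff forall_3 mat_def)
next
  fix k assume "k \<in> {mat 1 :: real^3^3}"
  then show "k \<in> symgroup W"
    unfolding symgroup_def using SO3_mat_1 by simp
qed

text \<open>The hypotheses say, entrywise, that \<open>[k11 k12; k21 k22]\<close> commutes with
  \<open>[a1 b1; b1 c1]\<close> and with \<open>[a2 b2; b2 c2]\<close>, and that these two do not commute.\<close>

lemma commutant_of_noncommuting_symmetric_2x2:
  fixes k11 k12 k21 k22 a1 b1 c1 a2 b2 c2 :: real
  assumes "k12 * b1 = b1 * k21" "k11 * b1 + k12 * c1 = a1 * k12 + b1 * k22"
    "k21 * a1 + k22 * b1 = b1 * k11 + c1 * k21"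
    and "k12 * b2 = b2 * k21" "k11 * b2 + k12 * c2 = a2 * k12 + b2 * k22"
    "k21 * a2 + k22 * b2 = b2 * k11 + c2 * k21"
    and x: "b2 * (a1 - c1) - b1 * (a2 - c2) \<noteq> 0"
  shows "k12 = 0 \<and> k21 = 0 \<and> k11 = k22"
proof -
  define x where "x = b2 * (a1 - c1) - b1 * (a2 - c2)"
  have "(k12 - k21) * x = 0"
    using assms(1-6) unfolding x_def by algebra
  then have k: "k12 = k21"
    using x unfolding x_def by simp
  have "(k11 - k22) * x = 0"
    using assms(2,5) k unfolding x_def by algebra
  then have "k11 = k22"
    using x unfolding x_def by simp
  moreover have "k12 * x = 0"
    using assms(2,5) \<open>k11 = k22\<close> unfolding x_def by algebra
  ultimately show ?thesis
    using k x unfolding x_def by simp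
qed

lemma axis3_eigenvector_block:
  fixes A :: "real^3^3"
  assumes sym: "transpose A = A" and eig: "A *v axis 3 1 = c *\<^sub>R axis 3 1"
  shows "A$1$3 = 0" "A$2$3 = 0" "A$3$1 = 0" "A$3$2 = 0" "A$2$1 = A$1$2"
proof -
  from arg_cong[OF eig, of "\<lambda>v. v$1"] arg_cong[OF eig, of "\<lambda>v. v$2"]
  show "A$1$3 = 0" "A$2$3 = 0"
    by (simp_all add: matrix_vector_mult_def sum_3 axis_def)
  moreover have "A$j$i = A$i$j" for i j
    using arg_cong[OF sym, of "\<lambda>M. M$i$j"] by (simp add: transpose_def)
  ultimately show "A$3$1 = 0" "A$3$2 = 0" "A$2$1 = A$1$2" by metis+
qed

lemma SO3_commuting_with_axis3_blocks:
  assumes k: "k \<in> SO3"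
    and proj: "k ** outer (axis 3 1) (axis 3 1) = outer (axis 3 1) (axis 3 1) ** k"
    and A: "\<And>A. A \<in> {A1, A2} \<Longrightarrow> k ** A = A ** k"
      "\<And>A. A \<in> {A1, A2} \<Longrightarrow> A$1$3 = 0 \<and> A$2$3 = 0 \<and> A$3$1 = 0 \<and> A$3$2 = 0 \<and> A$2$1 = A$1$2"
    and nc: "A1 ** A2 \<noteq> A2 ** A1"
  shows "k \<in> Z2"
proof -
  from arg_cong[OF proj, of "\<lambda>M. M$1$3"] arg_cong[OF proj, of "\<lambda>M. M$2$3"]
    arg_cong[OF proj, of "\<lambda>M. M$3$1"] arg_cong[OF proj, of "\<lambda>M. M$3$2"]
  have kz: "k$1$3 = 0" "k$2$3 = 0" "k$3$1 = 0" "k$3$2 = 0"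
    by (simp_all add: matrix_matrix_mult_def sum_3 outer_def axis_def)
  have eqs: "k$1$2 * A$1$2 = A$1$2 * k$2$1 \<and>
      k$1$1 * A$1$2 + k$1$2 * A$2$2 = A$1$1 * k$1$2 + A$1$2 * k$2$2 \<and>
      k$2$1 * A$1$1 + k$2$2 * A$1$2 = A$1$2 * k$1$1 + A$2$2 * k$2$1" if "A \<in> {A1, A2}" for A
    using arg_cong[OF A(1)[OF that], of "\<lambda>M. M$1$1"] arg_cong[OF A(1)[OF that], of "\<lambda>M. M$1$2"]
      arg_cong[OF A(1)[OF that], of "\<lambda>M. M$2$1"] A(2)[OF that]
    by (simp add: matrix_matrix_mult_def sum_3 kz algebra_simps)
  have "A2$1$2 * (A1$1$1 - A1$2$2) - A1$1$2 * (A2$1$1 - A2$2$2) \<noteq> 0"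
  proof
    assume "A2$1$2 * (A1$1$1 - A1$2$2) - A1$1$2 * (A2$1$1 - A2$2$2) = 0"
    moreover have "A1$1$3 = 0 \<and> A1$2$3 = 0 \<and> A1$3$1 = 0 \<and> A1$3$2 = 0 \<and> A1$2$1 = A1$1$2"
      "A2$1$3 = 0 \<and> A2$2$3 = 0 \<and> A2$3$1 = 0 \<and> A2$3$2 = 0 \<and> A2$2$1 = A2$1$2"
      using A(2) by simp_all
    ultimately have "A1 ** A2 = A2 ** A1"
      by (simp add: vec_eq_iff forall_3 matrix_matrix_mult_def sum_3 algebra_simps)
    with nc show False by simp
  qed
  with eqs[OF insertI1] eqs[OF insertI2[OF singletonI]]
  have k12: "k$1$2 = 0" "k$2$1 = 0" "k$1$1 = k$2$2"
    using commutant_of_noncommuting_symmetric_2x2 by blast+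
  have "(k ** transpose k) $ 1 $ 1 = 1" "(k ** transpose k) $ 3 $ 3 = 1"
    using SO3D(4)[OF k] by (simp_all add: mat_def)
  then have sq: "k$1$1 * k$1$1 = 1" "k$3$3 * k$3$3 = 1"
    by (simp_all add: matrix_matrix_mult_def transpose_def sum_3 kz k12)
  have "det k = k$1$1 * k$1$1 * k$3$3"
    using k12 kz by (simp add: det_3)
  then have k33: "k$3$3 = 1"
    using SO3D(2)[OF k] sq by simp
  have "k$1$1 = 1 \<or> k$1$1 = -1"
    using sq(1) by (metis mult_cancel_left2 mult_minus_left square_eq_1_iff)
  then show "k \<in> Z2"
    using k12 kz k33 unfolding Z2_def
    by (auto simp: vec_eq_iff forall_3 mat_def diag3_def vector_3)
qed

lemma symgroup_eq_Z2:
  fixes W :: "(real^3^3) set"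
  assumes sym: "\<And>A. A \<in> W \<Longrightarrow> transpose A = A"
    and axis_eig: "\<And>A. A \<in> W \<Longrightarrow> \<exists>c. A *v axis 3 1 = c *\<^sub>R axis 3 1"
    and proj: "outer (axis 3 1) (axis 3 1) \<in> W"
    and noncomm: "\<not> commuting W"
  shows "symgroup W = Z2"
proof -
  have block: "A$1$3 = 0 \<and> A$2$3 = 0 \<and> A$3$1 = 0 \<and> A$3$2 = 0 \<and> A$2$1 = A$1$2" if A: "A \<in> W" for A
  proof -
    obtain c where "A *v axis 3 1 = c *\<^sub>R axis 3 1"
      using axis_eig[OF A] by blast
    then show ?thesis
      using axis3_eigenvector_block[OF sym[OF A]] by simp
  qed
  obtain A1 A2 where A12: "A1 \<in> W" "A2 \<in> W" and nc: "A1 ** A2 \<noteq> A2 ** A1"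
    using noncomm unfolding commuting_def by blast
  show ?thesis
  proof (intro set_eqI iffI)
    fix k assume k: "k \<in> symgroup W"
    show "k \<in> Z2"
    proof (rule SO3_commuting_with_axis3_blocks[OF _ _ _ _ nc])
      show "k \<in> SO3"
        using k unfolding symgroup_def by auto
      show "k ** outer (axis 3 1) (axis 3 1) = outer (axis 3 1) (axis 3 1) ** k"
        by (rule symgroup_commute[OF k proj])
      show "k ** A = A ** k" if "A \<in> {A1, A2}" for A
        using that A12 symgroup_commute[OF k] by blast
      show "A$1$3 = 0 \<and> A$2$3 = 0 \<and> A$3$1 = 0 \<and> A$3$2 = 0 \<and> A$2$1 = A$1$2" if "A \<in> {A1, A2}" for A
        using that A12 block by blast
    qed
  next
    fix k assume "k \<in> Z2"
    moreover have "diag3 (-1) (-1) 1 ** A ** transpose (diag3 (-1) (-1) 1) = A" if "A \<in> W" for A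
      using block[OF that]
      by (simp add: vec_eq_iff forall_3 diag3_conj_entry vector_3)
    ultimately show "k \<in> symgroup W"
      unfolding Z2_def symgroup_def using SO3_mat_1 diag3_SO3[of "-1" "-1" 1] by auto
  qed
qed

lemma diag3_eq_iff: "diag3 a b c = diag3 a' b' c' \<longleftrightarrow> a = a' \<and> b = b' \<and> c = c'"
  by (auto simp: diag3_def vec_eq_iff forall_3 vector_3)

lemma card_D2: "card D2 = 4"
  by (simp add: D2_def mat_1_diag3 diag3_eq_iff)

lemma card_Z2: "card Z2 = 2"
  by (simp add: Z2_def mat_1_diag3 diag3_eq_iff)

lemma card_conjg: "g \<in> SO3 \<Longrightarrow> card (conjg g S) = card S"
proof -
  assume g: "g \<in> SO3"
  have "inj (\<lambda>h. g ** h ** transpose g)"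
    by (rule inj_on_inverseI[where g = "\<lambda>k. transpose g ** k ** g"]) (rule conj_transpose_cancel[OF g])
  then show ?thesis
    unfolding conjg_def by (simp add: card_image inj_on_subset)
qed

lemma finite_conjg: "finite S \<Longrightarrow> finite (conjg g S)"
  unfolding conjg_def by simp

lemma orthotropic_not_monoclinic: "g \<in> SO3 \<Longrightarrow> g' \<in> SO3 \<Longrightarrow> \<not> conjg g D2 \<subseteq> conjg g' Z2"
proof
  assume "g \<in> SO3" "g' \<in> SO3" "conjg g D2 \<subseteq> conjg g' Z2"
  moreover have "finite (conjg g' Z2)"
    unfolding Z2_def by (rule finite_conjg) simp
  ultimately have "card D2 \<le> card Z2"
    using card_mono card_conjg by metis
  then show False
    by (simp add: card_D2 card_Z2)
qed

lemma orthotropic_not_triclinic: "g \<in> SO3 \<Longrightarrow> \<not> conjg g D2 \<subseteq> {mat 1}"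
proof
  assume "g \<in> SO3" "conjg g D2 \<subseteq> {mat 1}"
  then have "card D2 \<le> 1"
    using card_mono[of "{mat 1}" "conjg g D2"] card_conjg by fastforce
  then show False
    by (simp add: card_D2)
qed

lemma monoclinic_not_triclinic: "g \<in> SO3 \<Longrightarrow> conjg g Z2 \<noteq> {mat 1}"
  using card_conjg[of g Z2] card_Z2 by auto

section \<open>The vector covariants and the symmetry classes\<close>

lemma cross3_closed_subspace_eq_UNIV:
  fixes V :: "(real^3) set"
  assumes V: "subspace V" and cross: "\<And>v w. v \<in> V \<Longrightarrow> w \<in> V \<Longrightarrow> cross3 v w \<in> V"
    and v: "v \<in> V" and w: "w \<in> V" and vw: "cross3 v w \<noteq> 0"
  shows "V = UNIV"
proof -
  define u where "u = cross3 v w"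
  have uV: "u \<in> V" unfolding u_def using cross[OF v w] .
  have "z \<in> V" for z
  proof -
    have "cross3 z u = (z \<bullet> w) *\<^sub>R v - (z \<bullet> v) *\<^sub>R w"
      unfolding u_def by (rule Lagrange)
    then have "cross3 z u \<in> V"
      using v w V by (simp add: subspace_diff subspace_scale)
    then have "cross3 u (cross3 z u) + (u \<bullet> z) *\<^sub>R u \<in> V"
      using cross uV V by (simp add: subspace_add subspace_scale)
    moreover have "cross3 u (cross3 z u) + (u \<bullet> z) *\<^sub>R u = (u \<bullet> u) *\<^sub>R z"
      by (simp add: Lagrange)
    moreover have "u \<bullet> u \<noteq> 0"
      using vw unfolding u_def by simp
    ultimately show ?thesis
      using V by (metis subspace_scale scaleR_scaleR field_class.field_inverse scaleR_one)
  qed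
  then show ?thesis by blast
qed

lemma cross3_closed_subspace_cases:
  fixes V :: "(real^3) set"
  assumes V: "subspace V" and cross: "\<And>v w. v \<in> V \<Longrightarrow> w \<in> V \<Longrightarrow> cross3 v w \<in> V"
  shows "V = {0} \<or> (\<exists>v. v \<noteq> 0 \<and> V = span {v}) \<or> V = UNIV"
proof (cases "\<exists>v\<in>V. \<exists>w\<in>V. cross3 v w \<noteq> 0")
  case True
  then show ?thesis
    using cross3_closed_subspace_eq_UNIV[OF V cross] by blast
next
  case parallel: False
  show ?thesis
  proof (cases "V = {0}")
    case False
    then obtain v where v: "v \<in> V" "v \<noteq> 0"
      using subspace_0[OF V] by blast
    have "w \<in> span {v}" if "w \<in> V" for w
    proof -
      have "cross3 v (cross3 v w) = 0"
        using parallel v(1) that by simp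
      then have "(v \<bullet> v) *\<^sub>R w = (v \<bullet> w) *\<^sub>R v"
        by (simp add: Lagrange)
      then have "w = ((v \<bullet> w) / (v \<bullet> v)) *\<^sub>R v"
        using v(2) by (metis divide_inverse_commute inner_eq_zero_iff scaleR_scaleR
            field_class.field_inverse scaleR_one)
      then show ?thesis
        by (metis span_base span_scale singletonI)
    qed
    moreover have "span {v} \<subseteq> V"
      using span_minimal[of "{v}" V] v V by blast
    ultimately show ?thesis
      using v by blast
  qed simp
qed

lemma commutes_with_axis_projection:
  assumes "A ** outer (axis 3 1) (axis 3 1) = outer (axis 3 1) (axis 3 1) ** A"
  shows "A$1$3 = 0" "A$2$3 = 0"
  using arg_cong[OF assms, of "\<lambda>M. M$1$3"] arg_cong[OF assms, of "\<lambda>M. M$2$3"]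
  by (simp_all add: matrix_matrix_mult_def sum_3 outer_def axis_def)

lemma commutes_with_axis_commutator:
  assumes sym: "transpose A = A" and a13: "A$1$3 = 0" and a23: "A$2$3 = 0"
    and comm: "A ** commutator (crossmat (axis 3 1)) A = commutator (crossmat (axis 3 1)) A ** A"
  shows "A$1$2 = 0" "A$1$1 = A$2$2"
proof -
  have "A$j$i = A$i$j" for i j
    using arg_cong[OF sym, of "\<lambda>M. M$i$j"] by (simp add: transpose_def)
  then have t: "A$3$1 = 0" "A$3$2 = 0" "A$2$1 = A$1$2"
    using a13 a23 by metis+
  have "(A$1$1 - A$2$2)^2 + (2 * A$1$2)^2 = 0"
    using arg_cong[OF comm, of "\<lambda>M. M$1$2"]
    by (simp add: commutator_def matrix_matrix_mult_def sum_3 crossmat_def vector_3 axis_def t a13 a23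
        power2_eq_square algebra_simps)
  then have "A$1$1 - A$2$2 = 0 \<and> 2 * A$1$2 = 0"
    by (simp only: sum_power2_eq_zero_iff)
  then show "A$1$2 = 0" "A$1$1 = A$2$2"
    by simp_all
qed

lemma contract2_axis3: "contract2 X (axis 3 1) $ i $ j = X i j 3 3"
  by (simp add: contract2_def axis_def sum_3)

lemma act4_diag3:
  "act4 (diag3 a b c) X i j k l = (vector [a,b,c] :: real^3) $ i * (vector [a,b,c] :: real^3) $ j
     * (vector [a,b,c] :: real^3) $ k * (vector [a,b,c] :: real^3) $ l * X i j k l"
proof -
  have diag_sum: "(\<Sum>m\<in>UNIV. diag3 a b c $ p $ m * f m) = (vector [a,b,c] :: real^3) $ p * f p" for p f
  proof -
    have "(\<Sum>m\<in>UNIV. diag3 a b c $ p $ m * f m) = (\<Sum>m\<in>UNIV. if p = m then (vector [a,b,c] :: real^3) $ p * f m else 0)"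
      by (rule sum.cong) (auto simp: diag3_def)
    then show ?thesis by simp
  qed
  have "act4 (diag3 a b c) X i j k l = (\<Sum>p\<in>UNIV. diag3 a b c $ i $ p * (\<Sum>q\<in>UNIV. diag3 a b c $ j $ q
      * (\<Sum>r\<in>UNIV. diag3 a b c $ k $ r * (\<Sum>s\<in>UNIV. diag3 a b c $ l $ s * X p q r s))))"
    by (simp add: act4_def sum_distrib_left mult.assoc)
  then show ?thesis
    by (simp only: diag_sum mult.assoc)
qed

lemma normalized_components_vanish:
  assumes X: "X \<in> H4"
    and c1: "X 1 3 3 3 = 0" and c2: "X 2 3 3 3 = 0" and c3: "X 1 2 3 3 = 0" and c4: "X 1 1 3 3 = X 2 2 3 3"
    and d13: "contract3 X $ 1 $ 3 = 0" and d23: "contract3 X $ 2 $ 3 = 0"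
    and dv: "4 * X 1 1 1 2 + 3 * X 1 1 2 3 = 0"
  shows "X 1 1 1 2 = 0" "X 1 1 2 3 = 0" "X 1 2 2 2 = 0" "X 2 2 2 3 = 0"
proof -
  note S = H4_symmetric[OF X]
  have tr: "X 1 1 k l + X 2 2 k l + X 3 3 k l = 0" for k l
    using H4_traceless[OF X, of k l] by (simp add: sum_3)
  have r1: "X 1 2 2 2 = - X 1 1 1 2" using tr[of 1 2] c3 by (simp add: S)
  have r2: "X 1 2 2 3 = - X 1 1 1 3" using tr[of 1 3] c1 by (simp add: S)
  have r3: "X 2 2 2 3 = - X 1 1 2 3" using tr[of 2 3] c2 by (simp add: S)
  have r4: "X 2 2 2 2 = X 1 1 1 1" using tr[of 1 1] tr[of 2 2] c4 by (simp add: S)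
  define \<alpha> where "\<alpha> = X 1 1 1 1 - 3 * X 1 1 2 2"
  define \<beta> where "\<beta> = 4 * X 1 1 1 2"
  have "X 1 1 1 1 * X 1 1 1 3 + 3 * X 1 1 1 2 * X 1 1 2 3 + 3 * X 1 1 1 3 * X 1 1 3 3 + 3 * X 1 1 2 2 * X 1 2 2 3
      + 6 * X 1 1 2 3 * X 1 2 3 3 + 3 * X 1 1 3 3 * X 1 3 3 3 + X 1 2 2 2 * X 2 2 2 3 + 3 * X 1 2 2 3 * X 2 2 3 3
      + 3 * X 1 2 3 3 * X 2 3 3 3 + X 1 3 3 3 * X 3 3 3 3 = 0"
    using d13 by (simp add: contract3_def sum_3 S algebra_simps)
  then have e1: "\<alpha> * X 1 1 1 3 + \<beta> * X 1 1 2 3 = 0"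
    unfolding \<alpha>_def \<beta>_def r1 r2 r3 c1 c2 c3 c4[symmetric] by (simp add: algebra_simps)
  have "X 1 1 1 2 * X 1 1 1 3 + 3 * X 1 1 2 2 * X 1 1 2 3 + 3 * X 1 1 2 3 * X 1 1 3 3 + 3 * X 1 2 2 2 * X 1 2 2 3
      + 6 * X 1 2 2 3 * X 1 2 3 3 + 3 * X 1 2 3 3 * X 1 3 3 3 + X 2 2 2 2 * X 2 2 2 3 + 3 * X 2 2 2 3 * X 2 2 3 3
      + 3 * X 2 2 3 3 * X 2 3 3 3 + X 2 3 3 3 * X 3 3 3 3 = 0"
    using d23 by (simp add: contract3_def sum_3 S algebra_simps)
  then have e2: "\<beta> * X 1 1 1 3 - \<alpha> * X 1 1 2 3 = 0"
    unfolding \<alpha>_def \<beta>_def r1 r2 r3 r4 c1 c2 c3 c4[symmetric] by (simp add: algebra_simps)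
  have "(\<alpha>^2 + \<beta>^2) * ((X 1 1 1 3)^2 + (X 1 1 2 3)^2)
      = (\<alpha> * X 1 1 1 3 + \<beta> * X 1 1 2 3)^2 + (\<beta> * X 1 1 1 3 - \<alpha> * X 1 1 2 3)^2"
    by (simp add: algebra_simps power2_eq_square)
  then have "\<beta> = 0 \<or> X 1 1 2 3 = 0"
    using e1 e2 by (auto simp: sum_power2_eq_zero_iff)
  with dv show "X 1 1 1 2 = 0" "X 1 1 2 3 = 0"
    unfolding \<beta>_def by auto
  with r1 r3 show "X 1 2 2 2 = 0" "X 2 2 2 3 = 0"
    by simp_all
qed

lemma half_turn_fixes_normalized:
  assumes X: "X \<in> H4" and e3: "axis 3 1 \<in> Cov1 X" and comm: "commuting (Cov2 X)"
    and dv: "4 * X 1 1 1 2 + 3 * X 1 1 2 3 = 0"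
  shows "act4 (diag3 (-1) 1 (-1)) X = X"
proof -
  note S = H4_symmetric[OF X]
  have proj_comm: "A$1$3 = 0" "A$2$3 = 0" if "A \<in> Cov2 X" for A
    using commutes_with_axis_projection comm Cov2_outer[OF e3] that unfolding commuting_def by metis+
  define C where "C = contract2 X (axis 3 1)"
  have C: "C \<in> Cov2 X"
    unfolding C_def by (rule Cov2_contract2[OF e3])
  have "C$1$2 = 0" "C$1$1 = C$2$2"
    using commutes_with_axis_commutator[OF Cov2_symmetric[OF X C] proj_comm[OF C]]
      comm C Cov2_commutator_crossmat[OF e3 C] unfolding commuting_def by metis+
  then have "X 1 2 3 3 = 0" "X 1 1 3 3 = X 2 2 3 3" "X 1 3 3 3 = 0" "X 2 3 3 3 = 0"
    using proj_comm[OF C] unfolding C_def contract2_axis3 by (simp_all add: S)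
  moreover have "contract3 X $ 1 $ 3 = 0" "contract3 X $ 2 $ 3 = 0"
    using proj_comm[OF Cov2_contract3] by simp_all
  ultimately have "X 1 1 1 2 = 0" "X 1 1 2 3 = 0" "X 1 2 2 2 = 0" "X 2 2 2 3 = 0"
    "X 1 2 3 3 = 0" "X 2 3 3 3 = 0"
    using normalized_components_vanish[OF X _ _ _ _ _ _ dv] by simp_all
  show ?thesis
  proof (intro ext)
    fix i j k l :: 3
    show "act4 (diag3 (-1) 1 (-1)) X i j k l = X i j k l"
      unfolding act4_diag3
      using exhaust_3[of i] exhaust_3[of j] exhaust_3[of k] exhaust_3[of l] \<open>X 1 1 1 2 = 0\<close>
        \<open>X 1 1 2 3 = 0\<close> \<open>X 1 2 2 2 = 0\<close> \<open>X 2 2 2 3 = 0\<close> \<open>X 1 2 3 3 = 0\<close> \<open>X 2 3 3 3 = 0\<close>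
      by (auto simp: vector_3 S)
  qed
qed

lemma normalized_Cov2_not_commuting:
  assumes X: "X \<in> H4" and e3: "axis 3 1 \<in> Cov1 X" and dv: "4 * X 1 1 1 2 + 3 * X 1 1 2 3 = 0"
  shows "\<not> commuting (Cov2 X)"
proof
  assume "commuting (Cov2 X)"
  then have "act4 (diag3 (-1) 1 (-1)) X = X"
    by (rule half_turn_fixes_normalized[OF X e3 _ dv])
  moreover have "diag3 (-1) 1 (-1) \<in> SO3"
    by (rule diag3_SO3) simp_all
  ultimately have "diag3 (-1) 1 (-1) *v axis 3 1 = axis 3 1"
    using Cov1_fixed[OF X _ _ e3] by blast
  then show False
    by (simp add: vec_eq_iff forall_3 matrix_vector_mult_def sum_3 diag3_def vector_3 axis_def)
qed

lemma tensor_form_circle_deriv: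
  fixes X :: tensor4
  defines "c \<equiv> \<lambda>t. vector [cos t, sin t, 0] :: real^3"
  assumes X: "X \<in> H4"
  shows "((\<lambda>t. tensor_form X (c t) (c t) (c t) (c t) + tensor_form X (c t) (c t) (c t) (axis 3 1))
    has_real_derivative 4 * X 1 1 1 2 + 3 * X 1 1 2 3) (at 0)"
proof -
  have "tensor_form X (c t) (c t) (c t) (c t) + tensor_form X (c t) (c t) (c t) (axis 3 1)
    = X 1 1 1 1 * cos t ^ 4 + 4 * X 1 1 1 2 * cos t ^ 3 * sin t + 6 * X 1 1 2 2 * cos t ^ 2 * sin t ^ 2
      + 4 * X 1 2 2 2 * cos t * sin t ^ 3 + X 2 2 2 2 * sin t ^ 4 + X 1 1 1 3 * cos t ^ 3
      + 3 * X 1 1 2 3 * cos t ^ 2 * sin t + 3 * X 1 2 2 3 * cos t * sin t ^ 2 + X 2 2 2 3 * sin t ^ 3" for t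
    unfolding tensor_form_def c_def
    by (simp add: sum_3 vector_3 axis_def H4_symmetric[OF X] algebra_simps power2_eq_square
        power3_eq_cube power4_eq_xxxx)
  moreover have "((\<lambda>t. X 1 1 1 1 * cos t ^ 4 + 4 * X 1 1 1 2 * cos t ^ 3 * sin t
      + 6 * X 1 1 2 2 * cos t ^ 2 * sin t ^ 2 + 4 * X 1 2 2 2 * cos t * sin t ^ 3 + X 2 2 2 2 * sin t ^ 4
      + X 1 1 1 3 * cos t ^ 3 + 3 * X 1 1 2 3 * cos t ^ 2 * sin t + 3 * X 1 2 2 3 * cos t * sin t ^ 2
      + X 2 2 2 3 * sin t ^ 3) has_real_derivative 4 * X 1 1 1 2 + 3 * X 1 1 2 3) (at 0)"
    by (auto intro!: derivative_eq_intros)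
  ultimately show ?thesis by simp
qed

text \<open>The first axis of the frame maximises \<open>x \<mapsto> H(x,x,x,x) + H(x,x,x,n)\<close> on the unit
  circle orthogonal to \<open>n\<close>; stationarity there is the one relation that the covariants alone
  do not provide.\<close>

lemma stationary_frame_exists:
  assumes H: "H \<in> H4" and n: "norm n = 1"
  obtains g where "g \<in> SO3" "g *v n = axis 3 1" "4 * act4 g H 1 1 1 2 + 3 * act4 g H 1 1 2 3 = 0"
proof -
  define S where "S = {x::real^3. norm x = 1 \<and> n \<bullet> x = 0}"
  define \<psi> where "\<psi> = (\<lambda>x. tensor_form H x x x x + tensor_form H x x x n)"
  have "S = {x. n \<bullet> x = 0} \<inter> sphere 0 1"
    unfolding S_def by auto
  then have "compact S"
    using closed_Int_compact[OF closed_hyperplane compact_sphere] by simp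
  moreover obtain u0 where "norm u0 = 1" "u0 \<bullet> n = 0"
    using unit_orthogonal_exists by blast
  then have "S \<noteq> {}"
    unfolding S_def by (auto simp: inner_commute)
  moreover have "continuous_on S \<psi>"
    unfolding \<psi>_def tensor_form_def by (intro continuous_intros)
  ultimately obtain u where "u \<in> S" and umax: "\<And>y. y \<in> S \<Longrightarrow> \<psi> y \<le> \<psi> u"
    using continuous_attains_sup by metis
  then have u: "norm u = 1" "u \<bullet> n = 0"
    unfolding S_def by (auto simp: inner_commute)
  define g where "g = frame u n"
  have g: "g \<in> SO3"
    unfolding g_def by (rule frame_SO3[OF u(1) n u(2)])
  define b where "b = cross3 n u"
  have circle: "cos t *\<^sub>R u + sin t *\<^sub>R b \<in> S" for t
  proof -
    have "u \<bullet> b = 0" "u \<bullet> u = 1" "b \<bullet> b = 1"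
      using u n norm_cross3_orthonormal[OF n u(1)]
      unfolding b_def by (simp_all add: dot_cross_self norm_eq_1 inner_commute)
    then have "norm (cos t *\<^sub>R u + sin t *\<^sub>R b) = 1"
      by (simp add: norm_eq_1 inner_add_left inner_add_right inner_commute power2_eq_square[symmetric])
    moreover have "n \<bullet> (cos t *\<^sub>R u + sin t *\<^sub>R b) = 0"
      using u(2) unfolding b_def by (simp add: inner_add_right inner_commute dot_cross_self)
    ultimately show ?thesis
      unfolding S_def by simp
  qed
  let ?c = "\<lambda>t. vector [cos t, sin t, 0] :: real^3"
  have profile: "tensor_form (act4 g H) (?c t) (?c t) (?c t) (?c t)
      + tensor_form (act4 g H) (?c t) (?c t) (?c t) (axis 3 1) = \<psi> (cos t *\<^sub>R u + sin t *\<^sub>R b)" for t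
  proof -
    have "transpose g *v axis 3 1 = n"
      unfolding g_def by (simp add: vec_eq_iff matrix_vector_mult_def transpose_def sum_3 frame_rows axis_def)
    then show ?thesis
      unfolding tensor_form_act4 \<psi>_def g_def b_def frame_transpose_mult_vec by simp
  qed
  have "4 * act4 g H 1 1 1 2 + 3 * act4 g H 1 1 2 3 = 0"
  proof (rule DERIV_local_max[OF tensor_form_circle_deriv[OF act4_in_H4[OF H SO3D(1)[OF g]]]])
    show "0 < (1::real)" by simp
    show "\<forall>t. \<bar>0 - t\<bar> < 1 \<longrightarrow> tensor_form (act4 g H) (?c t) (?c t) (?c t) (?c t)
        + tensor_form (act4 g H) (?c t) (?c t) (?c t) (axis 3 1)
      \<le> tensor_form (act4 g H) (?c 0) (?c 0) (?c 0) (?c 0)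
        + tensor_form (act4 g H) (?c 0) (?c 0) (?c 0) (axis 3 1)"
      using umax[OF circle] profile[of 0] by (simp add: profile)
  qed
  moreover have "g *v n = axis 3 1"
    unfolding g_def by (rule frame_mult_vec(1)[OF u(1) n u(2)])
  ultimately show thesis
    using that g by blast
qed

lemma rotation_to_axis3_exists:
  fixes n :: "real^3"
  assumes "norm n = 1"
  obtains g where "g \<in> SO3" "g *v n = axis 3 1"
proof -
  obtain A where A: "rotation_matrix A" "A *v axis 3 1 = n"
    using rotation_matrix_exists_basis[of n 3] assms by auto
  then have "transpose A \<in> SO3"
    unfolding SO3_def rotation_matrix_def by (simp add: orthogonal_matrix_def)
  moreover have "transpose A *v n = axis 3 1"
    using A unfolding rotation_matrix_def orthogonal_matrix_def
    by (metis matrix_vector_mul_assoc matrix_vector_mul_lid)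
  ultimately show thesis using that by blast
qed

lemma normalize_Cov1:
  assumes "v \<in> Cov1 H" "v \<noteq> 0"
  obtains n where "n \<in> Cov1 H" "norm n = 1" "v = norm v *\<^sub>R n"
proof -
  have "(1 / norm v) *\<^sub>R v \<in> Cov1 H"
    by (rule subspace_scale[OF subspace_Cov1 assms(1)])
  with assms(2) show thesis
    using that[of "(1 / norm v) *\<^sub>R v"] by simp
qed

lemma Cov1_trivial_if_commuting:
  assumes H: "H \<in> H4" and comm: "commuting (Cov2 H)"
  shows "Cov1 H = {0}"
proof (rule ccontr)
  assume "Cov1 H \<noteq> {0}"
  then obtain v where "v \<in> Cov1 H" "v \<noteq> 0"
    using subspace_0[OF subspace_Cov1] by blast
  then obtain n where n: "n \<in> Cov1 H" "norm n = 1"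
    using normalize_Cov1 by metis
  then obtain g where g: "g \<in> SO3" "g *v n = axis 3 1"
    and dv: "4 * act4 g H 1 1 1 2 + 3 * act4 g H 1 1 2 3 = 0"
    using stationary_frame_exists[OF H] by metis
  have "axis 3 1 \<in> Cov1 (act4 g H)"
    using n(1) g unfolding Cov1_act4[OF g(1) H] by (metis image_eqI)
  moreover have "commuting (Cov2 (act4 g H))"
    using comm unfolding Cov2_act4[OF g(1) H] commuting_conj_iff[OF g(1)] .
  ultimately show False
    using normalized_Cov2_not_commuting[OF act4_in_H4[OF H SO3D(1)[OF g(1)]] _ dv] by blast
qed

lemma Cov1_eq_0_iff_commuting:
  assumes H: "H \<in> H4"
  shows "Cov1 H = {0} \<longleftrightarrow> commuting (Cov2 H)"
proof
  assume Cov1: "Cov1 H = {0}"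
  show "commuting (Cov2 H)"
    unfolding commuting_def
  proof (intro ballI)
    fix A B assume A: "A \<in> Cov2 H" and B: "B \<in> Cov2 H"
    have "transpose (commutator A B) = - commutator A B"
      unfolding transpose_commutator Cov2_symmetric[OF H A] Cov2_symmetric[OF H B]
      by (rule commutator_swap)
    then have "commutator A B = crossmat (axial (commutator A B))"
      by (simp add: crossmat_axial)
    also have "\<dots> = 0"
      using Cov1_axial_commutator[OF A B] Cov1
      by (simp add: crossmat_def vec_eq_iff forall_3 vector_3)
    finally show "A ** B = B ** A"
      unfolding commutator_def by simp
  qed
qed (rule Cov1_trivial_if_commuting[OF H])

lemma symgroup_Cov2_monoclinic:
  assumes H: "H \<in> H4" and v: "v \<noteq> 0" and line: "Cov1 H = span {v}"
  shows "\<exists>g\<in>SO3. symgroup (Cov2 H) = conjg g Z2"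
proof -
  have "v \<in> Cov1 H"
    unfolding line by (rule span_base) simp
  then obtain n where n: "n \<in> Cov1 H" "norm n = 1" and vn: "v = norm v *\<^sub>R n"
    using v by (rule normalize_Cov1)
  obtain g where g: "g \<in> SO3" "g *v n = axis 3 1"
    using rotation_to_axis3_exists[OF n(2)] by blast
  define H' where "H' = act4 g H"
  have H': "H' \<in> H4"
    unfolding H'_def by (rule act4_in_H4[OF H SO3D(1)[OF g(1)]])
  have Cov1': "Cov1 H' = (\<lambda>w. g *v w) ` Cov1 H"
    unfolding H'_def by (rule Cov1_act4[OF g(1) H])
  have e3: "axis 3 1 \<in> Cov1 H'"
    unfolding Cov1' using n(1) g(2) by (metis image_eqI)
  have on_axis: "\<exists>c. w = c *\<^sub>R axis 3 1" if w: "w \<in> Cov1 H'" for w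
  proof -
    obtain c where "w = g *v (c *\<^sub>R v)"
      using w unfolding Cov1' line span_singleton by blast
    then have "w = (c * norm v) *\<^sub>R axis 3 1"
      by (subst (asm) vn) (simp add: matrix_vector_mult_scaleR g(2))
    then show ?thesis by blast
  qed
  have "symgroup (Cov2 H') = Z2"
  proof (rule symgroup_eq_Z2)
    show "transpose A = A" if "A \<in> Cov2 H'" for A
      by (rule Cov2_symmetric[OF H' that])
    show "\<exists>c. A *v axis 3 1 = c *\<^sub>R axis 3 1" if "A \<in> Cov2 H'" for A
      by (rule on_axis[OF Cov1_mat_vec[OF that e3]])
    show "outer (axis 3 1) (axis 3 1) \<in> Cov2 H'"
      by (rule Cov2_outer[OF e3])
    show "\<not> commuting (Cov2 H')"
    proof
      assume "commuting (Cov2 H')"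
      then have "axis 3 1 = (0::real^3)"
        using Cov1_trivial_if_commuting[OF H'] e3 by blast
      then show False
        by (simp add: axis_eq_0_iff)
    qed
  qed
  then have "conjg g (symgroup (Cov2 H)) = Z2"
    unfolding H'_def Cov2_act4[OF g(1) H] symgroup_conj[OF g(1)] .
  then have "symgroup (Cov2 H) = conjg (transpose g) Z2"
    using conjg_transpose_conjg[OF g(1), of "symgroup (Cov2 H)"] by simp
  then show ?thesis
    using SO3_transpose[OF g(1)] by (rule bexI)
qed

lemma symgroup_Cov2_triclinic: "Cov1 H = UNIV \<Longrightarrow> symgroup (Cov2 H) = {mat 1}"
  by (rule symgroup_fixing_all_projections) (simp add: Cov2_outer)

lemma Cov1_eq_0_iff_orthotropic:
  assumes "H \<in> H4"
  shows "Cov1 H = {0} \<longleftrightarrow> (\<exists>g\<in>SO3. conjg g D2 \<subseteq> symgroup (Cov2 H))"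
  using Cov1_eq_0_iff_commuting[OF assms] commuting_iff_orthotropic[OF Cov2_symmetric[OF assms]]
  by simp

theorem lemma9p1:
  fixes H :: tensor4
  assumes "H \<in> H4"
  shows "(Cov1 H = {0} \<longleftrightarrow> (\<exists>g\<in>SO3. conjg g D2 \<subseteq> symgroup (Cov2 H)))
       \<and> (dim (Cov1 H) = 1 \<longleftrightarrow> (\<exists>g\<in>SO3. symgroup (Cov2 H) = conjg g Z2))
       \<and> (dim (Cov1 H) = 3 \<longleftrightarrow> symgroup (Cov2 H) = {mat 1})"
proof -
  note orthotropic = Cov1_eq_0_iff_orthotropic[OF assms]
  consider "Cov1 H = {0}" | v where "v \<noteq> 0" "Cov1 H = span {v}" | "Cov1 H = UNIV"
    using cross3_closed_subspace_cases[OF subspace_Cov1 Cov1_cross3] by blast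
  then show ?thesis
  proof cases
    case 1
    then obtain g where "g \<in> SO3" "conjg g D2 \<subseteq> symgroup (Cov2 H)"
      using orthotropic by blast
    then have "\<not> (\<exists>g'\<in>SO3. symgroup (Cov2 H) = conjg g' Z2)" "symgroup (Cov2 H) \<noteq> {mat 1}"
      using orthotropic_not_monoclinic orthotropic_not_triclinic by metis+
    with 1 orthotropic show ?thesis by simp
  next
    case (2 v)
    then have "Cov1 H \<noteq> {0}" "dim (Cov1 H) = 1"
      using span_base[of v "{v}"] by auto
    moreover obtain g where "g \<in> SO3" "symgroup (Cov2 H) = conjg g Z2"
      using symgroup_Cov2_monoclinic[OF assms 2] by blast
    ultimately show ?thesis
      using orthotropic monoclinic_not_triclinic by auto
  next
    case 3
    then have "Cov1 H \<noteq> {0}" "dim (Cov1 H) = 3"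
      using axis_eq_0_iff[of 1 "1::real"] by auto
    moreover note symgroup_Cov2_triclinic[OF 3]
    ultimately show ?thesis
      using orthotropic monoclinic_not_triclinic by auto
  qed
qed

end
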